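(* Consider Setting A (stated in the context), and suppose the sequence of communication graphs $\{\mathcal G[k]\}_{k\ge 0}$ satisfies conditions (C1), (C2) and (C3). Then for every desired rate $\rho\in(0,1)$ there exist observer gains $L_1,\dots,L_N$ (with $L_j$ of compatible dimensions, $L_j$ used by node $j$) such that, when all nodes run Algorithm 1, for every initial state $x[0]$ and all initial estimates there exist constants $c\ge 0$ and $K\in\mathbb N$ with $$\|\hat x_i[k]-x[k]\|\le c\,\rho^k\quad\text{for all }k\ge K\text{ and all }i\in\mathcal V,$$ where $\hat x_i[k]=T\hat z_i[k]$ and $\hat z_i[k]$ stacks $\hat z^{(1)}_i[k],\dots,\hat z^{(N)}_i[k]$.
   Context: Setting A. Consider the discrete-time LTI system $x[k+1]=Ax[k]$, $k\in\mathbb N$, with $A\in\mathbb R^{n\times n}$, monitored by $N$ nodes $\mathcal V=\{1,\dots,N\}$; node $i$ measures $y_i[k]=C_ix[k]$ with $C_i\in\mathbb R^{r_i\times n}$. Let $C=[C_1^T\ \cdots\ C_N^T]^T$ and assume $(A,C)$ is observable. Fix an invertible $T$ such that $\bar A=T^{-1}AT$ is block lower-triangular with diagonal blocks $A_{11},\dots,A_{NN}$ and off-diagonal blocks $A_{jq}$ ($q<j$), zero blocks above the diagonal, and $C_iT=[C_{i1}\ \cdots\ C_{ii}\ 0\ \cdots\ 0]$ for each $i$, with $(A_{jj},C_{jj})$ observable for every $j$ (such $T$ exists). With $z[k]=T^{-1}x[k]$ partitioned compatibly into sub-states $z^{(1)}[k],\dots,z^{(N)}[k]$, one has $z^{(j)}[k+1]=A_{jj}z^{(j)}[k]+\sum_{q=1}^{j-1}A_{jq}z^{(q)}[k]$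 and $y_j[k]=\sum_{q=1}^{j}C_{jq}z^{(q)}[k]$. Node $j$ is called the source node of sub-state $j$. Communication: at each time $k$ there is a directed graph $\mathcal G[k]=(\mathcal V,\mathcal E[k])$; $(l,i)\in\mathcal E[k]$ means $l$ can send to $i$ at time $k$; $\mathcal N_i[k]=\{l\neq i:(l,i)\in\mathcal E[k]\}$. The union graph over $[k_1,k_2]$ has vertex set $\mathcal V$ and edge set $\bigcup_{\tau=k_1}^{k_2}\mathcal E[\tau]$. Algorithm 1 (run for every sub-state $j$ simultaneously). Each node $i$ keeps an estimate $\hat z^{(j)}_i[k]$ (arbitrary initial value) and a freshness index $\tau^{(j)}_i[k]\in\mathbb N\cup\{\omega\}$, where $\omega$ is a special symbol; initially $\tau^{(j)}_j[0]=0$ and $\tau^{(j)}_i[0]=\omega$ for $i\ne j$. Source node $j$: $\tau^{(j)}_j[k]=0$ for all $k$, and $\hat z^{(j)}_j[k+1]=(A_{jj}-L_jC_{jj})\hat z^{(j)}_j[k]+\sum_{q=1}^{j-1}(A_{jq}-L_jC_{jq})\hat z^{(q)}_j[k]+L_jy_j[k]$, where $L_j$ is an observer gain. Non-source node $i\neq j$ at time $k$: let $\mathcal M^{(j)}_i[k]=\{l\in\mathcal N_i[k]:\tau^{(j)}_l[k]\neq\omega\}$; if $\tau^{(j)}_i[k]=\omega$ let $\mathcal F^{(j)}_i[k]=\mathcal M^{(j)}_i[k]$, otherwise $\mathcal F^{(j)}_i[k]=\{l\in\mathcal M^{(j)}_i[k]:\tau^{(j)}_l[k]<\tau^{(j)}_i[k]\}$.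 If $\mathcal F^{(j)}_i[k]\ne\emptyset$, pick $u\in\arg\min_{l\in\mathcal F^{(j)}_i[k]}\tau^{(j)}_l[k]$ and set $\tau^{(j)}_i[k+1]=\tau^{(j)}_u[k]+1$ and $\hat z^{(j)}_i[k+1]=A_{jj}\hat z^{(j)}_u[k]+\sum_{q=1}^{j-1}A_{jq}\hat z^{(q)}_i[k]$ ("$i$ adopts the information of $u$ at time $k$"). If $\mathcal F^{(j)}_i[k]=\emptyset$, set $\tau^{(j)}_i[k+1]=\omega$ if $\tau^{(j)}_i[k]=\omega$ and $\tau^{(j)}_i[k+1]=\tau^{(j)}_i[k]+1$ otherwise, and $\hat z^{(j)}_i[k+1]=A_{jj}\hat z^{(j)}_i[k]+\sum_{q=1}^{j-1}A_{jq}\hat z^{(q)}_i[k]$ ("$i$ adopts its own information"). Conditions on the graph sequence: there is an increasing sequence $\mathbb I=\{t_0,t_1,\dots\}\subset\mathbb N$ with $t_0=0$ such that, with $f(t_q)=t_{q+1}-t_q$: (C1) $f(t_q)$ is non-decreasing in $q$; (C2) with $m(k)=\max\{t_q\in\mathbb I:t_q\le k\}$ and $g(k)=f(m(k))$, one has $\limsup_{k\to\infty}\frac{2(N-1)g(k)}{k}=\delta<1$; (C3) for each $q$, the union graph over $[t_q,t_{q+1}-1]$ is strongly connected. *)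

theory Defs
  imports "Jordan_Normal_Form.Matrix" "HOL-Library.Liminf_Limsup" "HOL-Library.Extended_Real"
begin

(* Block bookkeeping: blocks of sizes d 0, d 1, ... ; block j occupies indices
   off d j ..< off d (Suc j). *)
definition off :: "(nat \<Rightarrow> nat) \<Rightarrow> nat \<Rightarrow> nat" where
  "off d j = (\<Sum>i<j. d i)"

definition blk :: "(nat \<Rightarrow> nat) \<Rightarrow> nat \<Rightarrow> nat" where
  "blk d a = (LEAST j. a < off d (Suc j))"

definition stack_vec :: "(nat \<Rightarrow> nat) \<Rightarrow> nat \<Rightarrow> (nat \<Rightarrow> real vec) \<Rightarrow> real vec" where
  "stack_vec d N v = vec (off d N) (\<lambda>a. v (blk d a) $ (a - off d (blk d a)))"

definition vstack_mat :: "(nat \<Rightarrow> nat) \<Rightarrow> nat \<Rightarrow> nat \<Rightarrow> (nat \<Rightarrow> real mat) \<Rightarrow> real mat" where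
  "vstack_mat r N m M = mat (off r N) m (\<lambda>(a,b). M (blk r a) $$ (a - off r (blk r a), b))"

definition blk_lower_mat :: "(nat \<Rightarrow> nat) \<Rightarrow> nat \<Rightarrow> (nat \<Rightarrow> nat \<Rightarrow> real mat) \<Rightarrow> real mat" where
  "blk_lower_mat d N Ab = mat (off d N) (off d N) (\<lambda>(a,b).
     (let j = blk d a; q = blk d b in
      if q \<le> j then Ab j q $$ (a - off d j, b - off d q) else 0))"

definition blk_row_mat :: "(nat \<Rightarrow> nat) \<Rightarrow> nat \<Rightarrow> nat \<Rightarrow> nat \<Rightarrow> (nat \<Rightarrow> real mat) \<Rightarrow> real mat" where
  "blk_row_mat d N ri i Cbi = mat ri (off d N) (\<lambda>(a,b).
     (let q = blk d b in if q \<le> i then Cbi q $$ (a, b - off d q) else 0))"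

definition vsum :: "nat \<Rightarrow> ('i \<Rightarrow> real vec) \<Rightarrow> 'i set \<Rightarrow> real vec" where
  "vsum m F S = vec m (\<lambda>a. \<Sum>q\<in>S. F q $ a)"

definition vnorm :: "real vec \<Rightarrow> real" where
  "vnorm v = sqrt (\<Sum>a<dim_vec v. (vec_index v a)^2)"

definition observable :: "real mat \<Rightarrow> real mat \<Rightarrow> bool" where
  "observable A C \<longleftrightarrow> (\<forall>w \<in> carrier_vec (dim_col A).
      (\<forall>k. C *\<^sub>v ((A ^\<^sub>m k) *\<^sub>v w) = 0\<^sub>v (dim_row C)) \<longrightarrow> w = 0\<^sub>v (dim_col A))"

(* Conditions (C1)-(C3) on the edge sequence E (E k = edge set at time k,
   (l,i) \<in> E k means l can send to i), vertex set {..<N}. *)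
definition graph_conditions :: "nat \<Rightarrow> (nat \<Rightarrow> (nat \<times> nat) set) \<Rightarrow> bool" where
  "graph_conditions N E \<longleftrightarrow> (\<exists>t :: nat \<Rightarrow> nat. strict_mono t \<and> t 0 = 0 \<and>
     (let f = (\<lambda>q. t (Suc q) - t q);
          g = (\<lambda>k. f (GREATEST q. t q \<le> k)) in
       mono f \<and>
       limsup (\<lambda>k. ereal (2 * (real N - 1) * real (g k) / real k)) < 1 \<and>
       (\<forall>q. \<forall>i<N. \<forall>l<N. (i, l) \<in> (\<Union>\<tau>\<in>{t q..<t (Suc q)}. E \<tau>)\<^sup>*)))"

(* Algorithm 1: zh k i j = estimate of sub-state j held by node i at time k,
   tau k i j = freshness index (None = omega).  Any choice of u among the
   minimisers is allowed. y k j = measurement of node j at time k. *)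
definition alg_run ::
  "nat \<Rightarrow> (nat \<Rightarrow> nat) \<Rightarrow> (nat \<Rightarrow> nat \<Rightarrow> real mat) \<Rightarrow> (nat \<Rightarrow> nat \<Rightarrow> real mat) \<Rightarrow>
   (nat \<Rightarrow> real mat) \<Rightarrow> (nat \<Rightarrow> (nat \<times> nat) set) \<Rightarrow> (nat \<Rightarrow> nat \<Rightarrow> real vec) \<Rightarrow>
   (nat \<Rightarrow> nat \<Rightarrow> nat \<Rightarrow> real vec) \<Rightarrow> (nat \<Rightarrow> nat \<Rightarrow> nat \<Rightarrow> nat option) \<Rightarrow> bool" where
  "alg_run N d Ab Cb L E y zh tau \<longleftrightarrow>
    (\<forall>k. \<forall>i<N. \<forall>j<N. zh k i j \<in> carrier_vec (d j)) \<and>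
    (\<forall>i<N. \<forall>j<N. tau 0 i j = (if i = j then Some 0 else None)) \<and>
    (\<forall>k. \<forall>j<N.
       tau k j j = Some 0 \<and>
       zh (Suc k) j j = (Ab j j - L j * Cb j j) *\<^sub>v zh k j j
          + vsum (d j) (\<lambda>q. (Ab j q - L j * Cb j q) *\<^sub>v zh k j q) {..<j}
          + L j *\<^sub>v y k j) \<and>
    (\<forall>k. \<forall>i<N. \<forall>j<N. i \<noteq> j \<longrightarrow>
       (let M = {l. l < N \<and> l \<noteq> i \<and> (l, i) \<in> E k \<and> tau k l j \<noteq> None};
            F = (if tau k i j = None then M
                 else {l \<in> M. the (tau k l j) < the (tau k i j)});
            own = vsum (d j) (\<lambda>q. Ab j q *\<^sub>v zh k i q) {..<j} in
        (F \<noteq> {} \<longrightarrow>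
           (\<exists>u\<in>F. (\<forall>l\<in>F. the (tau k u j) \<le> the (tau k l j)) \<and>
              tau (Suc k) i j = Some (Suc (the (tau k u j))) \<and>
              zh (Suc k) i j = Ab j j *\<^sub>v zh k u j + own)) \<and>
        (F = {} \<longrightarrow>
           tau (Suc k) i j = map_option Suc (tau k i j) \<and>
           zh (Suc k) i j = Ab j j *\<^sub>v zh k i j + own)))"

end

theory Submission
  imports Defs
begin

(* Every observable pair (A\<^sub>j\<^sub>j, C\<^sub>j\<^sub>j) admits a deadbeat gain L\<^sub>j, i.e. A\<^sub>j\<^sub>j - L\<^sub>j C\<^sub>j\<^sub>j is
   nilpotent (by induction on the dimension: restrict the dynamics to the kernel of an output
   that does not vanish, and keep the information lost by the projection as a new output).
   With these gains the source of sub-state j estimates it exactly a fixed number of steps after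
   its estimates of the lower sub-states have become exact. Information that left the source
   after that time is propagated by Algorithm 1 along the true dynamics, hence stays exact, and
   since a node only adopts fresher information, (C3) brings such information to every node
   within N - 1 connectivity intervals. Induction on j makes all estimates exact from some time
   on, so the bound holds with c = 0 for every \<rho>. *)

lemma dim_vsum [simp]: "dim_vec (vsum n F S) = n"
  by (simp add: vsum_def)

lemma vsum_carrier [simp]: "vsum n F S \<in> carrier_vec n"
  by (simp add: vsum_def)

lemma index_vsum [simp]: "a < n \<Longrightarrow> vsum n F S $ a = (\<Sum>q\<in>S. F q $ a)"
  by (simp add: vsum_def)

lemma vsum_cong: "(\<And>q. q \<in> S \<Longrightarrow> F q = G q) \<Longrightarrow> vsum n F S = vsum n G S"
  by (simp add: vsum_def)

lemma index_vsum_smult: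
  "a < n \<Longrightarrow> \<forall>i\<in>S. v i \<in> carrier_vec n \<Longrightarrow> vsum n (\<lambda>i. w i \<cdot>\<^sub>v v i) S $ a = (\<Sum>i\<in>S. w i * v i $ a)"
  by (auto intro!: sum.cong)

lemma smult_zero_vec [simp]: "(k :: 'a :: mult_zero) \<cdot>\<^sub>v 0\<^sub>v n = 0\<^sub>v n"
  by (intro eq_vecI) auto

lemma eq_carrier_vecI:
  "u \<in> carrier_vec n \<Longrightarrow> v \<in> carrier_vec n \<Longrightarrow> (\<And>a. a < n \<Longrightarrow> u $ a = v $ a) \<Longrightarrow> u = v"
  by (rule eq_vecI) auto

section \<open>Deadbeat output injection\<close>

definition lin_endo :: "nat \<Rightarrow> (real vec \<Rightarrow> real vec) \<Rightarrow> bool" where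
  "lin_endo n f \<longleftrightarrow> (\<forall>x\<in>carrier_vec n. f x \<in> carrier_vec n) \<and>
     (\<forall>x\<in>carrier_vec n. \<forall>y\<in>carrier_vec n. f (x + y) = f x + f y) \<and>
     (\<forall>a. \<forall>x\<in>carrier_vec n. f (a \<cdot>\<^sub>v x) = a \<cdot>\<^sub>v f x)"

definition lin_form :: "nat \<Rightarrow> (real vec \<Rightarrow> real) \<Rightarrow> bool" where
  "lin_form n h \<longleftrightarrow> (\<forall>x\<in>carrier_vec n. \<forall>y\<in>carrier_vec n. h (x + y) = h x + h y) \<and>
     (\<forall>a. \<forall>x\<in>carrier_vec n. h (a \<cdot>\<^sub>v x) = a * h x)"

definition vec_subspace :: "nat \<Rightarrow> real vec set \<Rightarrow> bool" where
  "vec_subspace n V \<longleftrightarrow> V \<subseteq> carrier_vec n \<and> 0\<^sub>v n \<in> V \<and>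
     (\<forall>x\<in>V. \<forall>y\<in>V. x + y \<in> V) \<and> (\<forall>a. \<forall>x\<in>V. a \<cdot>\<^sub>v x \<in> V)"

definition vec_span :: "nat \<Rightarrow> (nat \<Rightarrow> real vec) \<Rightarrow> nat set \<Rightarrow> real vec set" where
  "vec_span n bs I = {vsum n (\<lambda>i. a i \<cdot>\<^sub>v bs i) I | a. True}"

text \<open>For matrices, \<open>output_injection n r ((*\<^sub>v) A) (\<lambda>i e. (C *\<^sub>v e) $ i) ls\<close> is
  \<open>e \<mapsto> (A - L C) e\<close>, the gains \<open>ls i\<close> being the columns of \<open>L\<close>.\<close>
definition output_injection ::
  "nat \<Rightarrow> nat \<Rightarrow> (real vec \<Rightarrow> real vec) \<Rightarrow> (nat \<Rightarrow> real vec \<Rightarrow> real) \<Rightarrow> (nat \<Rightarrow> real vec) \<Rightarrow>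
   real vec \<Rightarrow> real vec" where
  "output_injection n r f h ls e = f e - vsum n (\<lambda>i. h i e \<cdot>\<^sub>v ls i) {..<r}"

lemma dim_output_injection [simp]: "dim_vec (output_injection n r f h ls e) = n"
  by (simp add: output_injection_def)

lemma output_injection_carrier [simp]: "output_injection n r f h ls e \<in> carrier_vec n"
  by (rule carrier_vecI) simp

lemma index_output_injection:
  "a < n \<Longrightarrow> \<forall>i<r. ls i \<in> carrier_vec n \<Longrightarrow>
   output_injection n r f h ls e $ a = f e $ a - (\<Sum>i<r. h i e * ls i $ a)"
  by (simp add: output_injection_def index_vsum_smult del: index_vsum)

lemma lin_endo_carrier: "lin_endo n f \<Longrightarrow> x \<in> carrier_vec n \<Longrightarrow> f x \<in> carrier_vec n"
  by (simp add: lin_endo_def)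

lemma lin_endo_add:
  "lin_endo n f \<Longrightarrow> x \<in> carrier_vec n \<Longrightarrow> y \<in> carrier_vec n \<Longrightarrow> f (x + y) = f x + f y"
  by (simp add: lin_endo_def)

lemma lin_endo_smult: "lin_endo n f \<Longrightarrow> x \<in> carrier_vec n \<Longrightarrow> f (a \<cdot>\<^sub>v x) = a \<cdot>\<^sub>v f x"
  by (simp add: lin_endo_def)

lemma lin_endo_zero: assumes "lin_endo n f" shows "f (0\<^sub>v n) = 0\<^sub>v n"
proof -
  have "f (0\<^sub>v n) = 0 \<cdot>\<^sub>v f (0\<^sub>v n)"
    using assms by (metis lin_endo_smult zero_carrier_vec smult_zero_vec)
  also have "\<dots> = 0\<^sub>v n"
    using lin_endo_carrier[OF assms, of "0\<^sub>v n"] by (intro eq_vecI) auto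
  finally show ?thesis .
qed

lemma lin_endo_diff:
  assumes f: "lin_endo n f" and x: "x \<in> carrier_vec n" and y: "y \<in> carrier_vec n"
  shows "f (x - y) = f x - f y"
proof -
  have "x - y = x + (-1) \<cdot>\<^sub>v y" using x y by (intro eq_vecI) auto
  moreover have "f x + (-1) \<cdot>\<^sub>v f y = f x - f y"
    using x y lin_endo_carrier[OF f] by (intro eq_vecI) auto
  ultimately show ?thesis using x y by (simp add: lin_endo_add[OF f] lin_endo_smult[OF f])
qed

lemma lin_form_add:
  "lin_form n h \<Longrightarrow> x \<in> carrier_vec n \<Longrightarrow> y \<in> carrier_vec n \<Longrightarrow> h (x + y) = h x + h y"
  by (simp add: lin_form_def)

lemma lin_form_smult: "lin_form n h \<Longrightarrow> x \<in> carrier_vec n \<Longrightarrow> h (a \<cdot>\<^sub>v x) = a * h x"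
  by (simp add: lin_form_def)

lemma lin_form_zero: assumes "lin_form n h" shows "h (0\<^sub>v n) = 0"
  using lin_form_smult[OF assms, of "0\<^sub>v n" 0] by simp

lemma lin_form_vsum:
  assumes "lin_form n h" "finite S" "\<forall>q\<in>S. F q \<in> carrier_vec n"
  shows "h (vsum n F S) = (\<Sum>q\<in>S. h (F q))"
  using assms(2,3)
proof (induction S rule: finite_induct)
  case empty
  then show ?case using lin_form_zero[OF assms(1)] by (simp add: vsum_def zero_vec_def)
next
  case (insert x S)
  have "vsum n F (insert x S) = F x + vsum n F S"
    using insert by (intro eq_vecI) auto
  then show ?case using insert lin_form_add[OF assms(1)] by simp
qed

lemma lin_form_comp: "lin_form n h \<Longrightarrow> lin_endo n f \<Longrightarrow> lin_form n (\<lambda>x. h (f x))"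
  by (simp add: lin_form_def lin_endo_def)

lemma lin_endo_output_injection:
  assumes f: "lin_endo n f" and h: "\<forall>i<r. lin_form n (h i)" and ls: "\<forall>i<r. ls i \<in> carrier_vec n"
  shows "lin_endo n (output_injection n r f h ls)"
  unfolding lin_endo_def
proof (intro conjI ballI allI)
  fix x y :: "real vec" assume x: "x \<in> carrier_vec n" and y: "y \<in> carrier_vec n"
  show "output_injection n r f h ls (x + y) = output_injection n r f h ls x + output_injection n r f h ls y"
  proof (rule eq_carrier_vecI[of _ n])
    fix a assume a: "a < n"
    have "(\<Sum>i<r. h i (x + y) * ls i $ a) = (\<Sum>i<r. h i x * ls i $ a) + (\<Sum>i<r. h i y * ls i $ a)"
      using h x y by (auto simp: lin_form_add distrib_right simp flip: sum.distrib intro!: sum.cong)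
    then show "output_injection n r f h ls (x + y) $ a
      = (output_injection n r f h ls x + output_injection n r f h ls y) $ a"
      using a lin_endo_carrier[OF f x] lin_endo_carrier[OF f y]
      by (simp add: index_output_injection[OF _ ls] lin_endo_add[OF f x y])
  qed simp_all
next
  fix c :: real and x :: "real vec" assume x: "x \<in> carrier_vec n"
  show "output_injection n r f h ls (c \<cdot>\<^sub>v x) = c \<cdot>\<^sub>v output_injection n r f h ls x"
  proof (rule eq_carrier_vecI[of _ n])
    fix a assume a: "a < n"
    have "(\<Sum>i<r. h i (c \<cdot>\<^sub>v x) * ls i $ a) = c * (\<Sum>i<r. h i x * ls i $ a)"
      using h x by (auto simp: lin_form_smult sum_distrib_left mult.assoc intro!: sum.cong)
    then show "output_injection n r f h ls (c \<cdot>\<^sub>v x) $ a = (c \<cdot>\<^sub>v output_injection n r f h ls x) $ a"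
      using a lin_endo_carrier[OF f x]
      by (simp add: index_output_injection[OF _ ls] lin_endo_smult[OF f x] right_diff_distrib)
  qed simp_all
qed simp

lemma vec_subspace_carrier: "vec_subspace n V \<Longrightarrow> x \<in> V \<Longrightarrow> x \<in> carrier_vec n"
  by (auto simp: vec_subspace_def)

lemma vec_subspace_zero: "vec_subspace n V \<Longrightarrow> 0\<^sub>v n \<in> V"
  by (simp add: vec_subspace_def)

lemma vec_subspace_add: "vec_subspace n V \<Longrightarrow> x \<in> V \<Longrightarrow> y \<in> V \<Longrightarrow> x + y \<in> V"
  by (simp add: vec_subspace_def)

lemma vec_subspace_smult: "vec_subspace n V \<Longrightarrow> x \<in> V \<Longrightarrow> a \<cdot>\<^sub>v x \<in> V"
  by (simp add: vec_subspace_def)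

lemma vec_subspace_diff:
  assumes V: "vec_subspace n V" and "x \<in> V" "y \<in> V"
  shows "x - y \<in> V"
proof -
  have "x - y = x + (-1) \<cdot>\<^sub>v y"
    using assms vec_subspace_carrier[OF V] by (intro eq_vecI) auto
  then show ?thesis using assms vec_subspace_add vec_subspace_smult by metis
qed

lemma vec_subspace_vsum:
  assumes V: "vec_subspace n V" and "finite S" "\<forall>q\<in>S. F q \<in> V"
  shows "vsum n F S \<in> V"
  using assms(2,3)
proof (induction S rule: finite_induct)
  case empty
  then show ?case using vec_subspace_zero[OF V] by (simp add: vsum_def zero_vec_def)
next
  case (insert x S)
  have "vsum n F (insert x S) = F x + vsum n F S"
    using insert vec_subspace_carrier[OF V] by (intro eq_vecI) auto
  then show ?case using insert vec_subspace_add[OF V] by simp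
qed

lemma vec_subspace_kernel:
  assumes "vec_subspace n V" "lin_form n c"
  shows "vec_subspace n {x \<in> V. c x = 0}"
  using assms lin_form_add lin_form_smult lin_form_zero vec_subspace_carrier
  unfolding vec_subspace_def by (smt (verit) mem_Collect_eq mult_eq_0_iff subset_iff)

lemma vec_span_carrier: "x \<in> vec_span n bs I \<Longrightarrow> x \<in> carrier_vec n"
  by (auto simp: vec_span_def)

text \<open>Projecting along \<open>s\<close> onto the kernel of \<open>c\<close> (where \<open>c s = 1\<close>) kills one spanning
  vector: some \<open>bs j\<close> has a nonzero coefficient in \<open>s\<close>, and its projection is a combination of
  the others.\<close>
lemma vec_span_kernel_drop:
  assumes I: "finite I" and bs: "bs ` I \<subseteq> carrier_vec n" and c: "lin_form n c"
    and s: "s \<in> vec_span n bs I" "c s = 1"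
  obtains j where "j \<in> I"
    "{x \<in> vec_span n bs I. c x = 0} \<subseteq> vec_span n (\<lambda>i. bs i - c (bs i) \<cdot>\<^sub>v s) (I - {j})"
proof -
  have c_span: "c (vsum n (\<lambda>i. \<beta> i \<cdot>\<^sub>v bs i) I) = (\<Sum>i\<in>I. \<beta> i * c (bs i))" for \<beta>
    using lin_form_vsum[OF c I, of "\<lambda>i. \<beta> i \<cdot>\<^sub>v bs i"] lin_form_smult[OF c] bs by auto
  have index_span: "a < n \<Longrightarrow> vsum n (\<lambda>i. \<beta> i \<cdot>\<^sub>v bs i) I $ a = (\<Sum>i\<in>I. \<beta> i * bs i $ a)" for \<beta> a
    using bs by (intro index_vsum_smult) auto
  obtain \<alpha> where \<alpha>: "s = vsum n (\<lambda>i. \<alpha> i \<cdot>\<^sub>v bs i) I"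
    using s(1) by (auto simp: vec_span_def)
  obtain j where j: "j \<in> I" "\<alpha> j \<noteq> 0"
  proof -
    have "(\<Sum>i\<in>I. \<alpha> i * c (bs i)) \<noteq> 0" using c_span[of \<alpha>] \<alpha> s(2) by simp
    then obtain j where "j \<in> I" "\<alpha> j * c (bs j) \<noteq> 0"
      using sum.not_neutral_contains_not_neutral by blast
    then show ?thesis using that by simp
  qed
  have sC: "s \<in> carrier_vec n" using vec_span_carrier[OF s(1)] .
  show ?thesis
  proof (rule that[OF j(1)], safe)
    fix x assume "x \<in> vec_span n bs I" and cx: "c x = 0"
    then obtain \<beta> where \<beta>: "x = vsum n (\<lambda>i. \<beta> i \<cdot>\<^sub>v bs i) I" by (auto simp: vec_span_def)
    define \<gamma> where "\<gamma> i = \<beta> i - \<beta> j * \<alpha> i / \<alpha> j" for i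
    have "x = vsum n (\<lambda>i. \<gamma> i \<cdot>\<^sub>v (bs i - c (bs i) \<cdot>\<^sub>v s)) (I - {j})"
    proof (rule eq_carrier_vecI[of _ n])
      fix a assume a: "a < n"
      define X where "X i = bs i $ a - c (bs i) * s $ a" for i
      have X_sum: "(\<Sum>i\<in>I. \<delta> i * X i) = (\<Sum>i\<in>I. \<delta> i * bs i $ a) - (\<Sum>i\<in>I. \<delta> i * c (bs i)) * s $ a"
        for \<delta>
        by (simp add: X_def right_diff_distrib sum_subtractf sum_distrib_right mult.assoc)
      have X_\<beta>: "(\<Sum>i\<in>I. \<beta> i * X i) = x $ a"
        using X_sum[of \<beta>] index_span[OF a, of \<beta>] c_span[of \<beta>] cx \<beta> by simp
      have X_\<alpha>: "(\<Sum>i\<in>I. \<alpha> i * X i) = 0"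
        using X_sum[of \<alpha>] index_span[OF a, of \<alpha>] c_span[of \<alpha>] s(2) \<alpha> by simp
      have "x $ a = (\<Sum>i\<in>I. \<beta> i * X i) - \<beta> j / \<alpha> j * (\<Sum>i\<in>I. \<alpha> i * X i)"
        using X_\<alpha> X_\<beta> by simp
      also have "\<dots> = (\<Sum>i\<in>I. \<beta> i * X i - \<beta> j / \<alpha> j * (\<alpha> i * X i))"
        by (simp add: sum_subtractf sum_distrib_left)
      also have "\<dots> = (\<Sum>i\<in>I. \<gamma> i * X i)"
        by (intro sum.cong) (simp_all add: \<gamma>_def algebra_simps)
      also have "\<dots> = (\<Sum>i\<in>I - {j}. \<gamma> i * X i)"
        using sum.remove[OF I j(1), of "\<lambda>i. \<gamma> i * X i"] j(2) by (simp add: \<gamma>_def)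
      also have "\<dots> = vsum n (\<lambda>i. \<gamma> i \<cdot>\<^sub>v (bs i - c (bs i) \<cdot>\<^sub>v s)) (I - {j}) $ a"
        using a bs sC by (auto simp: X_def intro!: sum.cong)
      finally show "x $ a = vsum n (\<lambda>i. \<gamma> i \<cdot>\<^sub>v (bs i - c (bs i) \<cdot>\<^sub>v s)) (I - {j}) $ a" .
    qed (use \<beta> in simp_all)
    then show "x \<in> vec_span n (\<lambda>i. bs i - c (bs i) \<cdot>\<^sub>v s) (I - {j})"
      by (auto simp: vec_span_def)
  qed
qed

lemma projection_into_kernel:
  assumes V: "vec_subspace n V" and c: "lin_form n c" and p: "p \<in> V" "c p = 1" and x: "x \<in> V"
  shows "x - c x \<cdot>\<^sub>v p \<in> V" "c (x - c x \<cdot>\<^sub>v p) = 0"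
proof -
  have xC: "x \<in> carrier_vec n" and pC: "p \<in> carrier_vec n"
    using V p x vec_subspace_carrier by blast+
  have "x - c x \<cdot>\<^sub>v p = x + (- c x) \<cdot>\<^sub>v p"
    using xC pC by (intro eq_vecI) auto
  then show "x - c x \<cdot>\<^sub>v p \<in> V" "c (x - c x \<cdot>\<^sub>v p) = 0"
    using V p x xC pC by (auto intro!: vec_subspace_add vec_subspace_smult
        simp: lin_form_add[OF c] lin_form_smult[OF c])
qed

text \<open>One induction step of the deadbeat construction: an output \<open>h i0\<close> that does not vanish on
  \<open>V\<close> is normalised by \<open>h i0 s = 1\<close>; the dynamics are restricted to \<open>ker (h i0)\<close> by projecting
  along \<open>s\<close>, and the lost information is kept as the new output \<open>h i0 \<circ> f\<close>.\<close>
locale kernel_reduction =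
  fixes n r :: nat and V :: "real vec set" and f :: "real vec \<Rightarrow> real vec"
    and h :: "nat \<Rightarrow> real vec \<Rightarrow> real" and i0 :: nat and s :: "real vec"
  assumes subspace: "vec_subspace n V"
    and f_lin: "lin_endo n f" and f_V: "f ` V \<subseteq> V"
    and h_lin: "\<forall>i<r. lin_form n (h i)" and i0: "i0 < r"
    and s_V: "s \<in> V" and h_s: "h i0 s = 1"
begin

definition kernel :: "real vec set" where
  "kernel = {x \<in> V. h i0 x = 0}"

definition proj :: "real vec \<Rightarrow> real vec" where
  "proj x = x - h i0 x \<cdot>\<^sub>v s"

definition reduced_map :: "real vec \<Rightarrow> real vec" where
  "reduced_map x = proj (f x)"

definition reduced_output :: "nat \<Rightarrow> real vec \<Rightarrow> real" where
  "reduced_output = h(r := \<lambda>x. h i0 (f x))"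

lemma V_carrier: "x \<in> V \<Longrightarrow> x \<in> carrier_vec n"
  using subspace by (rule vec_subspace_carrier)

lemma s_carrier: "s \<in> carrier_vec n"
  using V_carrier s_V .

lemma h0_lin: "lin_form n (h i0)"
  using h_lin i0 by simp

lemma kernel_subspace: "vec_subspace n kernel"
  unfolding kernel_def using subspace h0_lin by (rule vec_subspace_kernel)

lemma kernel_subset: "kernel \<subseteq> V"
  by (auto simp: kernel_def)

lemma proj_kernel: "x \<in> V \<Longrightarrow> proj x \<in> kernel"
  using projection_into_kernel[OF subspace h0_lin s_V h_s] by (simp add: kernel_def proj_def)

lemma proj_id: "x \<in> carrier_vec n \<Longrightarrow> h i0 x = 0 \<Longrightarrow> proj x = x"
  using s_carrier by (intro eq_vecI) (auto simp: proj_def)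

lemma proj_lin: "lin_endo n proj"
  unfolding lin_endo_def
proof (intro conjI ballI allI)
  fix x y :: "real vec" assume x: "x \<in> carrier_vec n" and y: "y \<in> carrier_vec n"
  show "proj (x + y) = proj x + proj y"
  proof (rule eq_carrier_vecI[of _ n])
    fix a assume "a < n"
    then show "proj (x + y) $ a = (proj x + proj y) $ a"
      using x y s_carrier by (simp add: proj_def lin_form_add[OF h0_lin] distrib_right)
  qed (use x y s_carrier in \<open>simp_all add: proj_def\<close>)
next
  fix c :: real and x :: "real vec" assume x: "x \<in> carrier_vec n"
  show "proj (c \<cdot>\<^sub>v x) = c \<cdot>\<^sub>v proj x"
  proof (rule eq_carrier_vecI[of _ n])
    fix a assume "a < n"
    then show "proj (c \<cdot>\<^sub>v x) $ a = (c \<cdot>\<^sub>v proj x) $ a"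
      using x s_carrier by (simp add: proj_def lin_form_smult[OF h0_lin] right_diff_distrib)
  qed (use x s_carrier in \<open>simp_all add: proj_def\<close>)
qed (use s_carrier in \<open>simp add: proj_def\<close>)

lemma reduced_map_lin: "lin_endo n reduced_map"
  using proj_lin f_lin unfolding reduced_map_def lin_endo_def by simp

lemma reduced_map_kernel: "reduced_map ` kernel \<subseteq> kernel"
  using f_V kernel_subset proj_kernel by (auto simp: reduced_map_def)

lemma reduced_output_lin: "\<forall>i<Suc r. lin_form n (reduced_output i)"
  using h_lin lin_form_comp[OF h0_lin f_lin] by (auto simp: reduced_output_def less_Suc_eq)

lemma reduced_observable:
  assumes obs: "\<forall>w\<in>V. (\<forall>k. \<forall>i<r. h i ((f ^^ k) w) = 0) \<longrightarrow> w = 0\<^sub>v n"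
  shows "\<forall>w\<in>kernel. (\<forall>k. \<forall>i<Suc r. reduced_output i ((reduced_map ^^ k) w) = 0) \<longrightarrow> w = 0\<^sub>v n"
proof (intro ballI impI)
  fix w assume w: "w \<in> kernel" and silent: "\<forall>k. \<forall>i<Suc r. reduced_output i ((reduced_map ^^ k) w) = 0"
  have f_iter_V: "(f ^^ k) w \<in> V" for k
    using w kernel_subset f_V by (induction k) auto
  have same_orbit: "(reduced_map ^^ k) w = (f ^^ k) w" for k
  proof (induction k)
    case (Suc k)
    have "h i0 (f ((f ^^ k) w)) = 0"
      using silent[rule_format, OF lessI, of k] Suc.IH by (simp add: reduced_output_def)
    then show ?case
      using Suc proj_id V_carrier f_iter_V[of "Suc k"] by (simp add: reduced_map_def)
  qed simp
  have "\<forall>k. \<forall>i<r. h i ((f ^^ k) w) = 0"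
  proof (intro allI impI)
    fix k i assume "i < r"
    then show "h i ((f ^^ k) w) = 0"
      using silent[rule_format, of i k] same_orbit by (simp add: reduced_output_def)
  qed
  then show "w = 0\<^sub>v n"
    using obs w kernel_subset by blast
qed

context
  fixes ls' :: "nat \<Rightarrow> real vec"
  assumes ls'_kernel: "\<forall>i<Suc r. ls' i \<in> kernel"
begin

definition pivot :: "real vec" where
  "pivot = s + ls' r"

text \<open>The gains of the reduced problem, with the feedback of the output \<open>h i0\<close> corrected so that
  the closed loop annihilates \<open>pivot\<close>.\<close>
definition lifted_gain :: "nat \<Rightarrow> real vec" where
  "lifted_gain i = ls' i +
     (if i = i0 then f pivot - vsum n (\<lambda>l. h l pivot \<cdot>\<^sub>v ls' l) {..<r} else 0\<^sub>v n)"

lemma ls'_V: "i < Suc r \<Longrightarrow> ls' i \<in> V"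
  using ls'_kernel kernel_subset by auto

lemma ls'_carrier: "\<forall>i<Suc r. ls' i \<in> carrier_vec n"
  using ls'_V V_carrier by blast

lemma pivot_V: "pivot \<in> V"
  unfolding pivot_def using vec_subspace_add[OF subspace s_V ls'_V] by simp

lemma pivot_carrier: "pivot \<in> carrier_vec n"
  using pivot_V V_carrier by blast

lemma h_pivot: "h i0 pivot = 1"
  using ls'_kernel h_s lin_form_add[OF h0_lin s_carrier ls'_carrier[rule_format, OF lessI]]
  by (simp add: pivot_def kernel_def)

lemma lifted_gain_V: "i < r \<Longrightarrow> lifted_gain i \<in> V"
proof -
  assume i: "i < r"
  have "vsum n (\<lambda>l. h l pivot \<cdot>\<^sub>v ls' l) {..<r} \<in> V"
    using ls'_V by (intro vec_subspace_vsum[OF subspace]) (auto intro: vec_subspace_smult[OF subspace])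
  then have "f pivot - vsum n (\<lambda>l. h l pivot \<cdot>\<^sub>v ls' l) {..<r} \<in> V"
    using f_V pivot_V by (intro vec_subspace_diff[OF subspace]) auto
  then show ?thesis
    using i ls'_V vec_subspace_zero[OF subspace] vec_subspace_add[OF subspace]
    by (simp add: lifted_gain_def)
qed

lemma lifted_gain_carrier: "\<forall>i<r. lifted_gain i \<in> carrier_vec n"
  using lifted_gain_V V_carrier by blast

lemma sum_lifted_gain:
  assumes a: "a < n"
  shows "(\<Sum>i<r. w i * lifted_gain i $ a) = (\<Sum>i<r. w i * ls' i $ a)
    + w i0 * (f pivot $ a - (\<Sum>l<r. h l pivot * ls' l $ a))" (is "_ = _ + w i0 * ?g")
proof -
  have "(\<Sum>i<r. w i * lifted_gain i $ a) = (\<Sum>i<r. w i * ls' i $ a + (if i = i0 then w i * ?g else 0))"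
    using a ls'_carrier
    by (intro sum.cong) (simp_all add: lifted_gain_def index_vsum_smult distrib_left del: index_vsum)
  also have "\<dots> = (\<Sum>i<r. w i * ls' i $ a) + w i0 * ?g"
    using i0 by (simp add: sum.distrib)
  finally show ?thesis .
qed

abbreviation closed_loop :: "real vec \<Rightarrow> real vec" where
  "closed_loop \<equiv> output_injection n r f h lifted_gain"

abbreviation reduced_closed_loop :: "real vec \<Rightarrow> real vec" where
  "reduced_closed_loop \<equiv> output_injection n (Suc r) reduced_map reduced_output ls'"

lemma closed_loop_pivot: "closed_loop pivot = 0\<^sub>v n"
proof (rule eq_carrier_vecI[of _ n])
  fix a assume "a < n"
  then show "closed_loop pivot $ a = 0\<^sub>v n $ a"
    using h_pivot by (simp add: index_output_injection[OF _ lifted_gain_carrier] sum_lifted_gain)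
qed simp_all

lemma closed_loop_kernel:
  assumes w: "w \<in> kernel"
  shows "closed_loop w = reduced_closed_loop w + h i0 (f w) \<cdot>\<^sub>v pivot"
proof (rule eq_carrier_vecI[of _ n])
  fix a assume a: "a < n"
  have hw: "h i0 w = 0" using w by (simp add: kernel_def)
  have fw: "f w \<in> carrier_vec n" using w kernel_subset f_V V_carrier by blast
  have "(\<Sum>i<r. reduced_output i w * ls' i $ a) = (\<Sum>i<r. h i w * ls' i $ a)"
    by (intro sum.cong) (auto simp: reduced_output_def)
  then have "reduced_closed_loop w $ a
      = f w $ a - h i0 (f w) * s $ a - ((\<Sum>i<r. h i w * ls' i $ a) + h i0 (f w) * ls' r $ a)"
    using a fw s_carrier
    by (simp add: index_output_injection[OF _ ls'_carrier] reduced_map_def proj_def reduced_output_def)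
  moreover have "closed_loop w $ a = f w $ a - (\<Sum>i<r. h i w * ls' i $ a)"
    using a hw by (simp add: index_output_injection[OF _ lifted_gain_carrier] sum_lifted_gain)
  moreover have "pivot $ a = s $ a + ls' r $ a"
    using a s_carrier ls'_carrier[rule_format, OF lessI] by (simp add: pivot_def)
  ultimately show "closed_loop w $ a = (reduced_closed_loop w + h i0 (f w) \<cdot>\<^sub>v pivot) $ a"
    using a pivot_carrier by (simp add: algebra_simps)
qed (use pivot_carrier in simp_all)

definition pivot_proj :: "real vec \<Rightarrow> real vec" where
  "pivot_proj e = e - h i0 e \<cdot>\<^sub>v pivot"

lemma pivot_proj_kernel: "e \<in> V \<Longrightarrow> pivot_proj e \<in> kernel"
  using projection_into_kernel[OF subspace h0_lin pivot_V h_pivot] by (simp add: pivot_proj_def kernel_def)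

lemma closed_loop_lin: "lin_endo n closed_loop"
  using lin_endo_output_injection[OF f_lin h_lin lifted_gain_carrier] .

lemma closed_loop_pivot_proj: "e \<in> V \<Longrightarrow> closed_loop (pivot_proj e) = closed_loop e"
  using V_carrier pivot_carrier closed_loop_pivot
  by (simp add: pivot_proj_def lin_endo_diff[OF closed_loop_lin] lin_endo_smult[OF closed_loop_lin])

lemma reduced_closed_loop_kernel: "w \<in> kernel \<Longrightarrow> reduced_closed_loop w \<in> kernel"
  unfolding output_injection_def using reduced_map_kernel ls'_kernel
  by (auto intro!: vec_subspace_diff[OF kernel_subspace] vec_subspace_vsum[OF kernel_subspace]
      vec_subspace_smult[OF kernel_subspace])

text \<open>On \<open>V\<close> the closed loop is semi-conjugate, through \<open>pivot_proj\<close>, to the reduced closed loop on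
  the kernel.\<close>
lemma closed_loop_step:
  assumes e: "e \<in> V"
  shows "closed_loop e \<in> V" "pivot_proj (closed_loop e) = reduced_closed_loop (pivot_proj e)"
proof -
  define X where "X = reduced_closed_loop (pivot_proj e)"
  have X: "X \<in> kernel" using reduced_closed_loop_kernel pivot_proj_kernel e by (simp add: X_def)
  have closed_e: "closed_loop e = X + h i0 (f (pivot_proj e)) \<cdot>\<^sub>v pivot"
    using closed_loop_kernel[OF pivot_proj_kernel] closed_loop_pivot_proj e by (simp add: X_def)
  have XC: "X \<in> carrier_vec n" using X kernel_subset V_carrier by blast
  have "h i0 X = 0" using X by (simp add: kernel_def)
  then have "pivot_proj (X + t \<cdot>\<^sub>v pivot) = X" for t
    using XC pivot_carrier h_pivot
    by (intro eq_vecI) (auto simp: pivot_proj_def lin_form_add[OF h0_lin] lin_form_smult[OF h0_lin])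
  moreover have "X + t \<cdot>\<^sub>v pivot \<in> V" for t
    using X kernel_subset pivot_V vec_subspace_add[OF subspace] vec_subspace_smult[OF subspace] by blast
  ultimately show "closed_loop e \<in> V" "pivot_proj (closed_loop e) = reduced_closed_loop (pivot_proj e)"
    using closed_e by (simp_all add: X_def)
qed

lemma closed_loop_nilpotent:
  assumes nil: "\<forall>w\<in>kernel. (reduced_closed_loop ^^ m) w = 0\<^sub>v n"
  shows "\<forall>e\<in>V. (closed_loop ^^ Suc m) e = 0\<^sub>v n"
proof
  fix e assume e: "e \<in> V"
  have iter: "(closed_loop ^^ k) e \<in> V \<and>
      pivot_proj ((closed_loop ^^ k) e) = (reduced_closed_loop ^^ k) (pivot_proj e)" for k
    by (induction k) (use e closed_loop_step in auto)
  have "(closed_loop ^^ Suc m) e = closed_loop ((closed_loop ^^ m) e)"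
    by simp
  also have "\<dots> = closed_loop (pivot_proj ((closed_loop ^^ m) e))"
    by (rule sym, rule closed_loop_pivot_proj) (use iter in blast)
  also have "pivot_proj ((closed_loop ^^ m) e) = 0\<^sub>v n"
    using iter nil pivot_proj_kernel e by simp
  also have "closed_loop (0\<^sub>v n) = 0\<^sub>v n"
    using lin_endo_zero[OF closed_loop_lin] .
  finally show "(closed_loop ^^ Suc m) e = 0\<^sub>v n" .
qed
end

end

lemma normalised_output_exists:
  assumes V: "vec_subspace n V" and f: "f ` V \<subseteq> V" and h: "\<forall>i<r. lin_form n (h i)"
    and obs: "\<forall>w\<in>V. (\<forall>k. \<forall>i<r. h i ((f ^^ k) w) = 0) \<longrightarrow> w = 0\<^sub>v n"
    and w: "w \<in> V" "w \<noteq> 0\<^sub>v n"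
  obtains i0 s where "i0 < r" "s \<in> V" "h i0 s = 1"
proof -
  have "(f ^^ k) w \<in> V" for k using w(1) f by (induction k) auto
  then obtain u i0 where u: "u \<in> V" "i0 < r" "h i0 u \<noteq> 0" using obs w by blast
  define s where "s = (1 / h i0 u) \<cdot>\<^sub>v u"
  have "h i0 s = 1"
    using h u lin_form_smult[of n "h i0", OF _ vec_subspace_carrier[OF V u(1)]] by (simp add: s_def)
  moreover have "s \<in> V" using u vec_subspace_smult[OF V] by (simp add: s_def)
  ultimately show ?thesis using that u(2) by blast
qed

lemma deadbeat_output_injection:
  assumes "finite I" "vec_subspace n V" "bs ` I \<subseteq> V" "V \<subseteq> vec_span n bs I"
    "lin_endo n f" "f ` V \<subseteq> V" "\<forall>i<r. lin_form n (h i)"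
    "\<forall>w\<in>V. (\<forall>k. \<forall>i<r. h i ((f ^^ k) w) = 0) \<longrightarrow> w = 0\<^sub>v n"
  shows "\<exists>ls. (\<forall>i<r. ls i \<in> V) \<and> (\<exists>m. \<forall>w\<in>V. (output_injection n r f h ls ^^ m) w = 0\<^sub>v n)"
  using assms
proof (induction "card I" arbitrary: I V bs f h r rule: less_induct)
  case less
  note I = less.prems(1) and V = less.prems(2) and bs = less.prems(3) and span = less.prems(4)
    and f = less.prems(5,6) and h = less.prems(7) and obs = less.prems(8)
  show ?case
  proof (cases "V \<subseteq> {0\<^sub>v n}")
    case True
    then show ?thesis
      using vec_subspace_zero[OF V] by (intro exI[of _ "\<lambda>_. 0\<^sub>v n"] conjI exI[of _ 0]) auto
  next
    case False
    then obtain w where "w \<in> V" "w \<noteq> 0\<^sub>v n" by auto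
    then obtain i0 s where s: "i0 < r" "s \<in> V" "h i0 s = 1"
      using normalised_output_exists[OF V f(2) h obs] by blast
    interpret kernel_reduction n r V f h i0 s
      using V f h s by unfold_locales
    obtain j where j: "j \<in> I"
      "{x \<in> vec_span n bs I. h i0 x = 0} \<subseteq> vec_span n (\<lambda>i. bs i - h i0 (bs i) \<cdot>\<^sub>v s) (I - {j})"
      using vec_span_kernel_drop[OF I _ h0_lin _ s(3)] bs span s(2) V_carrier by blast
    have "kernel \<subseteq> vec_span n (\<lambda>i. proj (bs i)) (I - {j})"
      using j(2) span by (auto simp: kernel_def proj_def)
    moreover have "(\<lambda>i. proj (bs i)) ` (I - {j}) \<subseteq> kernel"
      using bs proj_kernel by auto
    moreover have "card (I - {j}) < card I"
      using card_Diff1_less[OF I j(1)] .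
    ultimately obtain ls' m where "\<forall>i<Suc r. ls' i \<in> kernel"
      "\<forall>w\<in>kernel. (output_injection n (Suc r) reduced_map reduced_output ls' ^^ m) w = 0\<^sub>v n"
      using less.hyps[of "I - {j}" kernel "\<lambda>i. proj (bs i)" reduced_map "Suc r" reduced_output] I
        kernel_subspace reduced_map_lin reduced_map_kernel reduced_output_lin reduced_observable[OF obs]
      by blast
    then show ?thesis
      using lifted_gain_V closed_loop_nilpotent by blast
  qed
qed

lemma funpow_mult_mat_vec:
  assumes "M \<in> carrier_mat n n" "w \<in> carrier_vec n"
  shows "((\<lambda>v. M *\<^sub>v v) ^^ k) w = (M ^\<^sub>m k) *\<^sub>v w"
  using assms(2)
proof (induction k arbitrary: w)
  case (Suc k)
  have "((\<lambda>v. M *\<^sub>v v) ^^ Suc k) w = ((\<lambda>v. M *\<^sub>v v) ^^ k) (M *\<^sub>v w)"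
    by (simp add: funpow_Suc_right del: funpow.simps)
  also have "\<dots> = (M ^\<^sub>m Suc k) *\<^sub>v w"
    using Suc assms(1) by (simp add: assoc_mult_mat_vec[of _ n n _ n])
  finally show ?case .
qed (use assms in simp)

lemma funpow_eq_on:
  assumes "\<forall>x\<in>S. F x = G x" "\<forall>x\<in>S. F x \<in> S" "x \<in> S"
  shows "(F ^^ m) x = (G ^^ m) x"
  using assms(3)
proof (induction m arbitrary: x)
  case (Suc m)
  then show ?case using assms(1,2) by (simp add: funpow_Suc_right del: funpow.simps)
qed simp

lemma mat_eq_0_if_mult_vec_eq_0:
  fixes M :: "'a :: semiring_1 mat"
  assumes "M \<in> carrier_mat m n" "\<And>e. e \<in> carrier_vec n \<Longrightarrow> M *\<^sub>v e = 0\<^sub>v m"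
  shows "M = 0\<^sub>m m n"
proof (rule eq_matI)
  fix i j assume i: "i < dim_row (0\<^sub>m m n :: 'a mat)" and j: "j < dim_col (0\<^sub>m m n :: 'a mat)"
  then have "M $$ (i, j) = (M *\<^sub>v unit_vec n j) $ i" using assms(1) by simp
  then show "M $$ (i, j) = 0\<^sub>m m n $$ (i, j)" using assms i j by simp
qed (use assms in simp_all)

lemma vec_span_unit_vec: "carrier_vec n \<subseteq> vec_span n (unit_vec n) {..<n}"
proof
  fix x :: "real vec" assume x: "x \<in> carrier_vec n"
  have "x = vsum n (\<lambda>i. x $ i \<cdot>\<^sub>v unit_vec n i) {..<n}"
  proof (rule eq_carrier_vecI[OF x vsum_carrier])
    fix a assume a: "a < n"
    have "(\<Sum>q<n. (x $ q \<cdot>\<^sub>v unit_vec n q) $ a) = (\<Sum>q<n. if q = a then x $ a else 0)"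
      using a by (intro sum.cong) auto
    then show "x $ a = vsum n (\<lambda>i. x $ i \<cdot>\<^sub>v unit_vec n i) {..<n} $ a" using a by simp
  qed
  then show "x \<in> vec_span n (unit_vec n) {..<n}" by (auto simp: vec_span_def)
qed

theorem observable_deadbeat_gain:
  fixes A C :: "real mat"
  assumes A: "A \<in> carrier_mat n n" and C: "C \<in> carrier_mat r n" and obs: "observable A C"
  obtains L m where "L \<in> carrier_mat n r" "(A - L * C) ^\<^sub>m m = 0\<^sub>m n n"
proof -
  define f where "f v = A *\<^sub>v v" for v
  define h where "h i v = (C *\<^sub>v v) $ i" for i v
  have subspace: "vec_subspace n (carrier_vec n)" by (auto simp: vec_subspace_def)
  have f_lin: "lin_endo n f"
    unfolding lin_endo_def f_def using A by (auto simp: mult_add_distrib_mat_vec mult_mat_vec)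
  have h_lin: "\<forall>i<r. lin_form n (h i)"
    unfolding lin_form_def h_def using C by (auto simp: mult_add_distrib_mat_vec mult_mat_vec)
  have f_obs: "\<forall>w\<in>carrier_vec n. (\<forall>k. \<forall>i<r. h i ((f ^^ k) w) = 0) \<longrightarrow> w = 0\<^sub>v n"
  proof (intro ballI impI)
    fix w :: "real vec" assume w: "w \<in> carrier_vec n" and silent: "\<forall>k. \<forall>i<r. h i ((f ^^ k) w) = 0"
    have "C *\<^sub>v ((A ^\<^sub>m k) *\<^sub>v w) = 0\<^sub>v (dim_row C)" for k
    proof (rule eq_vecI)
      fix i assume "i < dim_vec (0\<^sub>v (dim_row C) :: real vec)"
      then have i: "i < r" using C by simp
      then have "h i ((f ^^ k) w) = 0" using silent by blast
      then show "(C *\<^sub>v ((A ^\<^sub>m k) *\<^sub>v w)) $ i = 0\<^sub>v (dim_row C) $ i"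
        using i C funpow_mult_mat_vec[OF A w, of k] by (simp add: h_def f_def[abs_def])
    qed (use C in simp)
    then show "w = 0\<^sub>v n" using obs w A unfolding observable_def by auto
  qed
  have "unit_vec n ` {..<n} \<subseteq> carrier_vec n" "f ` carrier_vec n \<subseteq> carrier_vec n"
    using A by (auto simp: f_def)
  then obtain ls m where ls: "\<forall>i<r. ls i \<in> carrier_vec n"
    and nil: "\<forall>w\<in>carrier_vec n. (output_injection n r f h ls ^^ m) w = 0\<^sub>v n"
    using deadbeat_output_injection[OF finite_lessThan subspace _ vec_span_unit_vec f_lin _ h_lin f_obs]
    by blast
  define L where "L = mat n r (\<lambda>(a, i). ls i $ a)"
  have L: "L \<in> carrier_mat n r" by (simp add: L_def)
  have M: "A - L * C \<in> carrier_mat n n" using A L C by auto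
  have closed_loop: "(A - L * C) *\<^sub>v e = output_injection n r f h ls e" if e: "e \<in> carrier_vec n" for e
  proof (rule eq_carrier_vecI[of _ n])
    fix a assume a: "a < n"
    have "(L *\<^sub>v (C *\<^sub>v e)) $ a = (\<Sum>i<r. h i e * ls i $ a)"
      using a L C by (auto simp: L_def h_def scalar_prod_def atLeast0LessThan mult.commute
          intro!: sum.cong)
    then show "((A - L * C) *\<^sub>v e) $ a = output_injection n r f h ls e $ a"
      using a A L C e by (simp add: index_output_injection[OF _ ls] f_def minus_mult_distrib_mat_vec
          assoc_mult_mat_vec[of _ n r _ n])
  qed (use M e in auto)
  have "(A - L * C) ^\<^sub>m m *\<^sub>v e = 0\<^sub>v n" if e: "e \<in> carrier_vec n" for e
  proof -
    have "(A - L * C) ^\<^sub>m m *\<^sub>v e = ((\<lambda>v. (A - L * C) *\<^sub>v v) ^^ m) e"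
      using funpow_mult_mat_vec[OF M e] by simp
    also have "\<dots> = (output_injection n r f h ls ^^ m) e"
      using closed_loop M e by (intro funpow_eq_on[of "carrier_vec n"]) auto
    finally show ?thesis using nil e by simp
  qed
  then show ?thesis using that L mat_eq_0_if_mult_vec_eq_0[OF pow_carrier_mat[OF M]] by blast
qed

section \<open>Block vectors\<close>

lemma off_Suc: "off d (Suc j) = off d j + d j"
  by (simp add: off_def)

lemma off_0 [simp]: "off d 0 = 0"
  by (simp add: off_def)

lemma off_mono: "j \<le> j' \<Longrightarrow> off d j \<le> off d j'"
  unfolding off_def by (rule sum_mono2) auto

lemma blk_eqI:
  assumes "off d j \<le> a" "a < off d (Suc j)"
  shows "blk d a = j"
  unfolding blk_def
proof (rule Least_equality)
  fix j' assume "a < off d (Suc j')"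
  then show "j \<le> j'" using assms(1) off_mono[of "Suc j'" j d] by (cases "j \<le> j'") auto
qed fact

lemma blk_off_add [simp]: "c < d q \<Longrightarrow> blk d (off d q + c) = q"
  by (rule blk_eqI) (auto simp: off_Suc)

lemma blk_bounds:
  assumes "a < off d N"
  shows "blk d a < N" "off d (blk d a) \<le> a" "a < off d (blk d a) + d (blk d a)"
proof -
  have "\<exists>j<N. off d j \<le> a \<and> a < off d (Suc j)"
    using assms
  proof (induction N)
    case (Suc N)
    show ?case
    proof (cases "a < off d N")
      case True
      then show ?thesis using Suc.IH less_SucI by blast
    next
      case False
      then show ?thesis using Suc.prems by (intro exI[of _ N]) auto
    qed
  qed simp
  then obtain j where "j < N" "off d j \<le> a" "a < off d (Suc j)" by blast
  then show "blk d a < N" "off d (blk d a) \<le> a" "a < off d (blk d a) + d (blk d a)"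
    using blk_eqI[of d j a] by (auto simp: off_Suc)
qed

lemma sum_lessThan_add_split:
  "(\<Sum>b<x + y. F b) = (\<Sum>b<x. F b) + (\<Sum>c<y. F (x + c))"
  for F :: "nat \<Rightarrow> 'a::comm_monoid_add"
  by (induction y) (auto simp: add.assoc)

lemma sum_blocks: "(\<Sum>b<off d N. F b) = (\<Sum>q<N. \<Sum>c<d q. F (off d q + c))"
  by (induction N) (auto simp: off_Suc sum_lessThan_add_split)

definition block_vec :: "(nat \<Rightarrow> nat) \<Rightarrow> nat \<Rightarrow> real vec \<Rightarrow> real vec" where
  "block_vec d j v = vec (d j) (\<lambda>a. v $ (off d j + a))"

lemma block_vec_carrier [simp]: "block_vec d j v \<in> carrier_vec (d j)"
  by (simp add: block_vec_def)

lemma dim_block_vec [simp]: "dim_vec (block_vec d j v) = d j"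
  by (simp add: block_vec_def)

lemma index_block_vec [simp]: "a < d j \<Longrightarrow> block_vec d j v $ a = v $ (off d j + a)"
  by (simp add: block_vec_def)

lemma stack_vec_block_vec:
  assumes w: "w \<in> carrier_vec (off d N)" and v: "\<forall>q<N. v q = block_vec d q w"
  shows "stack_vec d N v = w"
proof (rule eq_vecI)
  fix a assume "a < dim_vec w"
  then have a: "a < off d N" using w by simp
  then show "stack_vec d N v $ a = w $ a"
    using blk_bounds[OF a] v by (simp add: stack_vec_def)
qed (use w in \<open>simp add: stack_vec_def\<close>)

lemma index_mult_mat_vec_sum:
  "M \<in> carrier_mat m n \<Longrightarrow> v \<in> carrier_vec n \<Longrightarrow> a < m \<Longrightarrow>
   (M *\<^sub>v v) $ a = (\<Sum>c<n. M $$ (a, c) * v $ c)"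
  by (simp add: scalar_prod_def atLeast0LessThan)

lemma block_row_mult:
  fixes M :: "nat \<Rightarrow> real mat"
  assumes j: "j < N" and v: "v \<in> carrier_vec (off d N)"
    and M: "\<forall>q\<le>j. M q \<in> carrier_mat m (d q)" and a: "a < m"
  shows "(\<Sum>b<off d N. (if blk d b \<le> j then M (blk d b) $$ (a, b - off d (blk d b)) else 0) * v $ b)
    = (M j *\<^sub>v block_vec d j v + vsum m (\<lambda>q. M q *\<^sub>v block_vec d q v) {..<j}) $ a"
proof -
  have "(\<Sum>b<off d N. (if blk d b \<le> j then M (blk d b) $$ (a, b - off d (blk d b)) else 0) * v $ b)
      = (\<Sum>q<N. \<Sum>c<d q. (if q \<le> j then M q $$ (a, c) else 0) * v $ (off d q + c))"
    unfolding sum_blocks by (intro sum.cong refl) auto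
  also have "\<dots> = (\<Sum>q<N. if q \<in> {..j} then (M q *\<^sub>v block_vec d q v) $ a else 0)"
  proof (intro sum.cong refl)
    fix q assume "q \<in> {..<N}"
    show "(\<Sum>c<d q. (if q \<le> j then M q $$ (a, c) else 0) * v $ (off d q + c))
      = (if q \<in> {..j} then (M q *\<^sub>v block_vec d q v) $ a else 0)"
      using M index_mult_mat_vec_sum[OF _ block_vec_carrier a, of "M q" d q v] by auto
  qed
  also have "\<dots> = (\<Sum>q\<in>{..<N} \<inter> {..j}. (M q *\<^sub>v block_vec d q v) $ a)"
    by (simp add: sum.inter_restrict)
  also have "\<dots> = (\<Sum>q\<le>j. (M q *\<^sub>v block_vec d q v) $ a)"
    using j by (intro sum.cong) auto
  also have "\<dots> = (M j *\<^sub>v block_vec d j v + vsum m (\<lambda>q. M q *\<^sub>v block_vec d q v) {..<j}) $ a"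
    using a M by (simp add: lessThan_Suc_atMost[symmetric])
  finally show ?thesis .
qed

lemma block_vec_blk_lower_mat_mult:
  assumes j: "j < N" and v: "v \<in> carrier_vec (off d N)"
    and Ab: "\<forall>j<N. \<forall>q\<le>j. Ab j q \<in> carrier_mat (d j) (d q)"
  shows "block_vec d j (blk_lower_mat d N Ab *\<^sub>v v)
    = Ab j j *\<^sub>v block_vec d j v + vsum (d j) (\<lambda>q. Ab j q *\<^sub>v block_vec d q v) {..<j}"
proof (rule eq_carrier_vecI[of _ "d j"])
  fix a assume a: "a < d j"
  have row: "off d j + a < off d N"
    using off_mono[of "Suc j" N d] j a by (simp add: off_Suc)
  have B: "blk_lower_mat d N Ab \<in> carrier_mat (off d N) (off d N)"
    by (simp add: blk_lower_mat_def)
  have "block_vec d j (blk_lower_mat d N Ab *\<^sub>v v) $ a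
      = (\<Sum>b<off d N. blk_lower_mat d N Ab $$ (off d j + a, b) * v $ b)"
    using a row by (simp add: index_mult_mat_vec_sum[OF B v])
  also have "\<dots> = (\<Sum>b<off d N.
      (if blk d b \<le> j then Ab j (blk d b) $$ (a, b - off d (blk d b)) else 0) * v $ b)"
    using a row by (intro sum.cong refl) (simp add: blk_lower_mat_def Let_def)
  finally show "block_vec d j (blk_lower_mat d N Ab *\<^sub>v v) $ a
    = (Ab j j *\<^sub>v block_vec d j v + vsum (d j) (\<lambda>q. Ab j q *\<^sub>v block_vec d q v) {..<j}) $ a"
    using block_row_mult[OF j v _ a, of "Ab j"] Ab j by simp
qed (use Ab j in \<open>auto intro: carrier_vecI\<close>)

lemma blk_row_mat_mult:
  assumes i: "i < N" and v: "v \<in> carrier_vec (off d N)"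
    and Cb: "\<forall>q\<le>i. Cb q \<in> carrier_mat ri (d q)"
  shows "blk_row_mat d N ri i Cb *\<^sub>v v
    = Cb i *\<^sub>v block_vec d i v + vsum ri (\<lambda>q. Cb q *\<^sub>v block_vec d q v) {..<i}"
proof (rule eq_carrier_vecI[of _ ri])
  fix a assume a: "a < ri"
  have B: "blk_row_mat d N ri i Cb \<in> carrier_mat ri (off d N)"
    by (simp add: blk_row_mat_def)
  have "(blk_row_mat d N ri i Cb *\<^sub>v v) $ a
      = (\<Sum>b<off d N. (if blk d b \<le> i then Cb (blk d b) $$ (a, b - off d (blk d b)) else 0) * v $ b)"
    unfolding index_mult_mat_vec_sum[OF B v a]
    using a by (intro sum.cong refl) (simp add: blk_row_mat_def Let_def)
  then show "(blk_row_mat d N ri i Cb *\<^sub>v v) $ a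
    = (Cb i *\<^sub>v block_vec d i v + vsum ri (\<lambda>q. Cb q *\<^sub>v block_vec d q v) {..<i}) $ a"
    using block_row_mult[OF i v Cb a] by simp
qed (use Cb in \<open>auto simp: blk_row_mat_def intro: carrier_vecI\<close>)

section \<open>Algorithm 1\<close>

lemma alg_run_carrier:
  "alg_run N d Ab Cb L E y zh tau \<Longrightarrow> i < N \<Longrightarrow> j < N \<Longrightarrow> zh k i j \<in> carrier_vec (d j)"
  by (simp add: alg_run_def)

lemma alg_run_init:
  "alg_run N d Ab Cb L E y zh tau \<Longrightarrow> i < N \<Longrightarrow> j < N \<Longrightarrow> i \<noteq> j \<Longrightarrow> tau 0 i j = None"
  by (simp add: alg_run_def)

lemma alg_run_source:
  assumes "alg_run N d Ab Cb L E y zh tau" "j < N"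
  shows "tau k j j = Some 0"
    and "zh (Suc k) j j = (Ab j j - L j * Cb j j) *\<^sub>v zh k j j
      + vsum (d j) (\<lambda>q. (Ab j q - L j * Cb j q) *\<^sub>v zh k j q) {..<j} + L j *\<^sub>v y k j"
  using assms by (simp_all add: alg_run_def)

text \<open>The update of a non-source node \<open>i\<close>, with the candidate set \<open>\<F>\<close> of Algorithm 1 written
  without the case distinction on \<open>\<tau>\<^sub>i = \<omega>\<close>.\<close>
lemma alg_run_nonsource:
  fixes k :: nat
  assumes run: "alg_run N d Ab Cb L E y zh tau" and i: "i < N" and j: "j < N" and ij: "i \<noteq> j"
  defines "F \<equiv> {l. l < N \<and> l \<noteq> i \<and> (l, i) \<in> E k \<and>
      (\<exists>tl. tau k l j = Some tl \<and> (\<forall>ti. tau k i j = Some ti \<longrightarrow> tl < ti))}"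
    and "own \<equiv> vsum (d j) (\<lambda>q. Ab j q *\<^sub>v zh k i q) {..<j}"
  obtains (adopt) u where "u \<in> F" "\<forall>l\<in>F. the (tau k u j) \<le> the (tau k l j)"
      "tau (Suc k) i j = Some (Suc (the (tau k u j)))" "zh (Suc k) i j = Ab j j *\<^sub>v zh k u j + own"
    | (keep) "F = {}" "tau (Suc k) i j = map_option Suc (tau k i j)"
      "zh (Suc k) i j = Ab j j *\<^sub>v zh k i j + own"
proof -
  define M where "M = {l. l < N \<and> l \<noteq> i \<and> (l, i) \<in> E k \<and> tau k l j \<noteq> None}"
  have F_eq: "F = (if tau k i j = None then M else {l \<in> M. the (tau k l j) < the (tau k i j)})"
    by (cases "tau k i j") (auto simp: F_def M_def)
  have "(F \<noteq> {} \<longrightarrow> (\<exists>u\<in>F. (\<forall>l\<in>F. the (tau k u j) \<le> the (tau k l j)) \<and>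
          tau (Suc k) i j = Some (Suc (the (tau k u j))) \<and> zh (Suc k) i j = Ab j j *\<^sub>v zh k u j + own)) \<and>
        (F = {} \<longrightarrow> tau (Suc k) i j = map_option Suc (tau k i j) \<and>
          zh (Suc k) i j = Ab j j *\<^sub>v zh k i j + own)"
    using run[unfolded alg_run_def, THEN conjunct2, THEN conjunct2, THEN conjunct2,
        rule_format, OF i j ij, where k = k]
    unfolding Let_def F_eq M_def own_def .
  then show ?thesis using that by blast
qed

lemma alg_run_propagate:
  assumes run: "alg_run N d Ab Cb L E y zh tau" and i: "i < N" and j: "j < N" and ij: "i \<noteq> j"
  obtains u where "u < N" "tau (Suc k) i j = map_option Suc (tau k u j)"
    "zh (Suc k) i j = Ab j j *\<^sub>v zh k u j + vsum (d j) (\<lambda>q. Ab j q *\<^sub>v zh k i q) {..<j}"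
proof (cases rule: alg_run_nonsource[OF run i j ij, where k = k, case_names adopt keep])
  case (adopt u)
  then show ?thesis using that[of u] by auto
next
  case keep
  then show ?thesis using that[of i] i by auto
qed

lemma alg_run_age_step:
  assumes run: "alg_run N d Ab Cb L E y zh tau" and i: "i < N" and j: "j < N"
  shows alg_run_age_keep: "tau k i j = Some a \<Longrightarrow> \<exists>a'\<le>Suc a. tau (Suc k) i j = Some a'"
    and alg_run_age_spread: "l < N \<Longrightarrow> l \<noteq> i \<Longrightarrow> (l, i) \<in> E k \<Longrightarrow> tau k l j = Some a \<Longrightarrow>
      \<exists>a'\<le>Suc a. tau (Suc k) i j = Some a'"
proof -
  show keep: "\<exists>a'\<le>Suc a. tau (Suc k) i j = Some a'" if ti: "tau k i j = Some a" for a
  proof (cases "i = j")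
    case True
    then show ?thesis using alg_run_source(1)[OF run j] by auto
  next
    case False
    then show ?thesis
    proof (cases rule: alg_run_nonsource[OF run i j False, where k = k, case_names adopt keep])
      case (adopt u)
      then have "the (tau k u j) < a" using ti by auto
      then show ?thesis using adopt(3) by auto
    qed (use ti in auto)
  qed
  show "\<exists>a'\<le>Suc a. tau (Suc k) i j = Some a'"
    if l: "l < N" "l \<noteq> i" "(l, i) \<in> E k" and tl: "tau k l j = Some a" for l a
  proof (cases "i = j")
    case True
    then show ?thesis using alg_run_source(1)[OF run j] by auto
  next
    case False
    show ?thesis
    proof (cases "\<exists>ti. tau k i j = Some ti \<and> ti \<le> a")
      case True
      then show ?thesis using keep by fastforce
    next
      case False
      then have l_candidate: "l \<in> {l. l < N \<and> l \<noteq> i \<and> (l, i) \<in> E k \<and>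
          (\<exists>tl. tau k l j = Some tl \<and> (\<forall>ti. tau k i j = Some ti \<longrightarrow> tl < ti))}"
        using l tl by auto
      show ?thesis
      proof (cases rule: alg_run_nonsource[OF run i j \<open>i \<noteq> j\<close>, where k = k, case_names adopt keep])
        case (adopt u)
        then have "the (tau k u j) \<le> a" using l_candidate tl by fastforce
        then show ?thesis using adopt(3) by auto
      next
        case keep
        then show ?thesis using l_candidate by blast
      qed
    qed
  qed
qed

lemma rtrancl_leaves_set:
  assumes "(x, y) \<in> R\<^sup>*" "x \<in> S" "y \<notin> S"
  obtains a b where "(a, b) \<in> R" "a \<in> S" "b \<notin> S"
  using assms by (induction rule: rtrancl_induct) auto

text \<open>Only (C3) is used: each connectivity interval starting with an incomplete set of
  informed nodes adds a new one.\<close>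
lemma eventually_all_informed:
  fixes G :: "nat \<Rightarrow> nat \<Rightarrow> bool"
  assumes E: "\<forall>k. E k \<subseteq> {..<N} \<times> {..<N}"
    and t: "strict_mono t" and conn: "\<forall>q. \<forall>i<N. \<forall>l<N. (i, l) \<in> (\<Union>\<tau>\<in>{t q..<t (Suc q)}. E \<tau>)\<^sup>*"
    and keep: "\<forall>k i. i < N \<longrightarrow> G k i \<longrightarrow> G (Suc k) i"
    and spread: "\<forall>k l i. (l, i) \<in> E k \<longrightarrow> G k l \<longrightarrow> G (Suc k) i"
    and seed: "s < N" "G start s"
  shows "\<exists>K. \<forall>k\<ge>K. \<forall>i<N. G k i"
proof -
  define S where "S k = {i. i < N \<and> G k i}" for k
  have S_mono: "S k \<subseteq> S k'" if "k \<le> k'" for k k'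
    using that by (induction k' rule: dec_induct) (use keep in \<open>auto simp: S_def\<close>)
  have S_fin: "finite (S k)" for k
    by (simp add: S_def)
  have seed_S: "s \<in> S k" if "start \<le> k" for k
    using S_mono[OF that] seed by (auto simp: S_def)
  have grow: "\<exists>b. b \<in> S (t (Suc q)) \<and> b \<notin> S (t q)"
    if late: "start \<le> t q" and incomplete: "S (t q) \<noteq> {..<N}" for q
  proof -
    obtain i where i: "i < N" "i \<notin> S (t q)" using incomplete by (auto simp: S_def)
    obtain a b where ab: "(a, b) \<in> (\<Union>\<tau>\<in>{t q..<t (Suc q)}. E \<tau>)" "a \<in> S (t q)" "b \<notin> S (t q)"
      using rtrancl_leaves_set[OF conn[rule_format, OF seed(1) i(1), where q = q] seed_S[OF late] i(2)] .
    then obtain \<tau> where \<tau>: "t q \<le> \<tau>" "\<tau> < t (Suc q)" "(a, b) \<in> E \<tau>" by auto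
    have "a \<in> S \<tau>" using S_mono[OF \<tau>(1)] ab(2) by blast
    then have "b \<in> S (Suc \<tau>)" using spread \<tau>(3) E by (auto simp: S_def)
    then have "b \<in> S (t (Suc q))" using S_mono \<tau>(2) by (meson Suc_leI subsetD)
    then show ?thesis using ab(3) by blast
  qed
  have count: "min N (Suc p) \<le> card (S (t (start + p)))" for p
  proof (induction p)
    case 0
    have "s \<in> S (t start)" using seed_S seq_suble[OF t] by blast
    then have "0 < card (S (t start))" using S_fin card_gt_0_iff by blast
    then show ?case by simp
  next
    case (Suc p)
    have sub: "S (t (start + p)) \<subseteq> S (t (start + Suc p))"
      using S_mono strict_mono_leD[OF t] by simp
    show ?case
    proof (cases "S (t (start + p)) = {..<N}")
      case True
      then show ?thesis using card_mono[OF S_fin sub] by simp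
    next
      case False
      moreover have "start \<le> t (start + p)" using seq_suble[OF t, of "start + p"] by simp
      ultimately obtain b where b: "b \<in> S (t (start + Suc p))" "b \<notin> S (t (start + p))"
        using grow by force
      have "card (insert b (S (t (start + p)))) \<le> card (S (t (start + Suc p)))"
        by (rule card_mono[OF S_fin]) (use sub b(1) in blast)
      then have "Suc (card (S (t (start + p)))) \<le> card (S (t (start + Suc p)))"
        using b(2) S_fin by (simp add: card_insert_disjoint)
      then show ?thesis using Suc.IH by (simp add: min_def split: if_splits)
    qed
  qed
  have all: "S (t (start + (N - 1))) = {..<N}"
  proof (rule card_seteq[OF finite_lessThan])
    show "S (t (start + (N - 1))) \<subseteq> {..<N}" by (auto simp: S_def)
    show "card {..<N} \<le> card (S (t (start + (N - 1))))" using count[of "N - 1"] seed(1) by simp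
  qed
  show ?thesis
  proof (intro exI allI impI)
    fix k i assume k: "t (start + (N - 1)) \<le> k" and i: "i < N"
    then have "i \<in> S k" using S_mono[OF k] all by blast
    then show "G k i" by (simp add: S_def)
  qed
qed

lemma mult_mat_vec_vsum:
  assumes M: "M \<in> carrier_mat m n" and F: "\<forall>q\<in>S. F q \<in> carrier_vec n"
  shows "M *\<^sub>v vsum n F S = vsum m (\<lambda>q. M *\<^sub>v F q) S"
proof (rule eq_carrier_vecI[of _ m])
  fix a assume a: "a < m"
  have "(M *\<^sub>v vsum n F S) $ a = (\<Sum>c<n. M $$ (a, c) * (\<Sum>q\<in>S. F q $ c))"
    using index_mult_mat_vec_sum[OF M vsum_carrier a] by simp
  also have "\<dots> = (\<Sum>q\<in>S. \<Sum>c<n. M $$ (a, c) * F q $ c)"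
    by (simp add: sum_distrib_left sum.swap[of _ S])
  also have "\<dots> = vsum m (\<lambda>q. M *\<^sub>v F q) S $ a"
    using F a index_mult_mat_vec_sum[OF M _ a] by simp
  finally show "(M *\<^sub>v vsum n F S) $ a = vsum m (\<lambda>q. M *\<^sub>v F q) S $ a" .
qed (use M in simp_all)

text \<open>Algorithm 1 run on the true trajectory \<open>zs\<close> of the sub-states, in the block-triangular
  coordinates.\<close>
locale observer_run =
  fixes N :: nat and d r :: "nat \<Rightarrow> nat" and Ab Cb :: "nat \<Rightarrow> nat \<Rightarrow> real mat"
    and L :: "nat \<Rightarrow> real mat" and E :: "nat \<Rightarrow> (nat \<times> nat) set"
    and zs :: "nat \<Rightarrow> nat \<Rightarrow> real vec" and zh :: "nat \<Rightarrow> nat \<Rightarrow> nat \<Rightarrow> real vec"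
    and tau :: "nat \<Rightarrow> nat \<Rightarrow> nat \<Rightarrow> nat option"
  assumes run: "alg_run N d Ab Cb L E
      (\<lambda>k j. Cb j j *\<^sub>v zs k j + vsum (r j) (\<lambda>q. Cb j q *\<^sub>v zs k q) {..<j}) zh tau"
    and Ab_dim: "\<forall>j<N. \<forall>q\<le>j. Ab j q \<in> carrier_mat (d j) (d q)"
    and Cb_dim: "\<forall>j<N. \<forall>q\<le>j. Cb j q \<in> carrier_mat (r j) (d q)"
    and L_dim: "\<forall>j<N. L j \<in> carrier_mat (d j) (r j)"
    and zs_carrier: "\<forall>k. \<forall>j<N. zs k j \<in> carrier_vec (d j)"
    and zs_step: "\<forall>k. \<forall>j<N.
      zs (Suc k) j = Ab j j *\<^sub>v zs k j + vsum (d j) (\<lambda>q. Ab j q *\<^sub>v zs k q) {..<j}"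
begin

lemma source_error_step:
  assumes j: "j < N" and lower: "\<forall>q<j. zh k j q = zs k q"
  shows "zh (Suc k) j j - zs (Suc k) j = (Ab j j - L j * Cb j j) *\<^sub>v (zh k j j - zs k j)"
proof -
  define z where "z q = zs k q" for q
  have Ajq: "Ab j q \<in> carrier_mat (d j) (d q)" and Cjq: "Cb j q \<in> carrier_mat (r j) (d q)"
    and zq: "z q \<in> carrier_vec (d q)" if "q \<le> j" for q
    using that j Ab_dim Cb_dim zs_carrier by (auto simp: z_def)
  have Lj: "L j \<in> carrier_mat (d j) (r j)" using L_dim j by simp
  have zh: "zh k j j \<in> carrier_vec (d j)" using alg_run_carrier[OF run j j] .
  define VA where "VA = vsum (d j) (\<lambda>q. Ab j q *\<^sub>v z q) {..<j}"
  define VC where "VC = vsum (r j) (\<lambda>q. Cb j q *\<^sub>v z q) {..<j}"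
  define VLC where "VLC = vsum (d j) (\<lambda>q. L j *\<^sub>v (Cb j q *\<^sub>v z q)) {..<j}"
  have LVC: "L j *\<^sub>v VC = VLC"
    unfolding VC_def VLC_def by (intro mult_mat_vec_vsum[OF Lj] ballI mult_mat_vec_carrier[OF Cjq zq]) auto
  have corr: "vsum (d j) (\<lambda>q. (Ab j q - L j * Cb j q) *\<^sub>v zh k j q) {..<j} = VA - VLC"
  proof (rule eq_carrier_vecI[of _ "d j"])
    fix a assume a: "a < d j"
    have "((Ab j q - L j * Cb j q) *\<^sub>v z q) $ a = (Ab j q *\<^sub>v z q) $ a - (L j *\<^sub>v (Cb j q *\<^sub>v z q)) $ a"
      if "q < j" for q
      using that a Ajq Cjq zq Lj
      by (simp add: minus_mult_distrib_mat_vec[of _ "d j" "d q"] assoc_mult_mat_vec[of _ "d j" "r j" _ "d q"])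
    then show "vsum (d j) (\<lambda>q. (Ab j q - L j * Cb j q) *\<^sub>v zh k j q) {..<j} $ a = (VA - VLC) $ a"
      using a lower by (simp add: VA_def VLC_def z_def sum_subtractf)
  qed (simp_all add: VA_def VLC_def)
  have "zh (Suc k) j j = (Ab j j - L j * Cb j j) *\<^sub>v zh k j j + (VA - VLC)
      + (L j *\<^sub>v (Cb j j *\<^sub>v z j) + VLC)"
    using alg_run_source(2)[OF run j, of k] corr LVC Lj Cjq[of j] zq[of j]
    by (simp add: z_def VC_def mult_add_distrib_mat_vec[of _ "d j" "r j"])
  moreover have "zs (Suc k) j = Ab j j *\<^sub>v z j + VA"
    using zs_step j by (simp add: z_def VA_def)
  moreover have "(Ab j j - L j * Cb j j) *\<^sub>v (zh k j j - z j)
      = (Ab j j - L j * Cb j j) *\<^sub>v zh k j j - (Ab j j - L j * Cb j j) *\<^sub>v z j"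
    using zh zq[of j] Ajq[of j] Cjq[of j] Lj by (intro mult_minus_distrib_mat_vec) auto
  moreover have "(Ab j j - L j * Cb j j) *\<^sub>v z j = Ab j j *\<^sub>v z j - L j *\<^sub>v (Cb j j *\<^sub>v z j)"
    using zq[of j] Ajq[of j] Cjq[of j] Lj
    by (simp add: minus_mult_distrib_mat_vec[of _ "d j" "d j"] assoc_mult_mat_vec[of _ "d j" "r j" _ "d j"])
  moreover have "Ab j j - L j * Cb j j \<in> carrier_mat (d j) (d j)"
    using Ajq[of j] Cjq[of j] Lj by auto
  ultimately show ?thesis
    using zh zq[of j] Ajq[of j] Cjq[of j] Lj
    by (intro eq_carrier_vecI[of _ "d j"]) (simp_all add: z_def VLC_def VA_def)
qed

lemma source_estimate_exact:
  assumes j: "j < N" and nil: "(Ab j j - L j * Cb j j) ^\<^sub>m m = 0\<^sub>m (d j) (d j)"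
    and lower: "\<forall>k\<ge>K. \<forall>q<j. zh k j q = zs k q"
  shows "\<forall>k\<ge>K + m. zh k j j = zs k j"
proof -
  define M where "M = Ab j j - L j * Cb j j"
  define err where "err k = zh k j j - zs k j" for k
  have M: "M \<in> carrier_mat (d j) (d j)"
    unfolding M_def using L_dim Cb_dim j by (intro minus_carrier_mat mult_carrier_mat) auto
  have err_carrier: "err k \<in> carrier_vec (d j)" for k
    using alg_run_carrier[OF run j j] zs_carrier j by (simp add: err_def)
  have err_pow: "err (k0 + p) = (M ^\<^sub>m p) *\<^sub>v err k0" if "K \<le> k0" for k0 p
    using that
  proof (induction p arbitrary: k0)
    case 0
    then show ?case using M err_carrier by simp
  next
    case (Suc p)
    have "err (k0 + Suc p) = (M ^\<^sub>m p) *\<^sub>v err (Suc k0)"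
      using Suc.IH[of "Suc k0"] Suc.prems by simp
    also have "err (Suc k0) = M *\<^sub>v err k0"
      using source_error_step[OF j] lower Suc.prems by (simp add: err_def M_def)
    finally show ?case
      using M err_carrier by (simp add: assoc_mult_mat_vec[of _ "d j" "d j" _ "d j"])
  qed
  have "(0\<^sub>m (d j) (d j) :: real mat) *\<^sub>v err K = 0\<^sub>v (d j)"
    using err_carrier[of K] by (intro eq_vecI) auto
  then have err_zero: "err (K + m) = 0\<^sub>v (d j)"
    using err_pow[of K m] nil by (simp add: M_def)
  show ?thesis
  proof (intro allI impI)
    fix k assume "K + m \<le> k"
    then have "err k = (M ^\<^sub>m (k - (K + m))) *\<^sub>v 0\<^sub>v (d j)"
      using err_pow[of "K + m" "k - (K + m)"] err_zero by simp
    then have err_k: "err k = 0\<^sub>v (d j)"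
      using M by (intro eq_vecI) auto
    show "zh k j j = zs k j"
    proof (rule eq_carrier_vecI[of _ "d j"])
      fix a assume a: "a < d j"
      have "err k $ a = 0" using err_k a by simp
      moreover have "dim_vec (zs k j) = d j" using zs_carrier j by simp
      ultimately show "zh k j j $ a = zs k j $ a" using a by (simp add: err_def)
    qed (use alg_run_carrier[OF run j j] zs_carrier j in auto)
  qed
qed

text \<open>Freshness index \<open>a\<close> at time \<open>k\<close> means the information left the source at time
  \<open>k - a\<close>; if that is after \<open>K0\<close>, it is exact, since it was propagated along the true
  dynamics.\<close>
lemma fresh_estimate_exact:
  assumes j: "j < N" and K: "K \<le> K0"
    and lower: "\<forall>k\<ge>K. \<forall>i<N. \<forall>q<j. zh k i q = zs k q"
    and source: "\<forall>k\<ge>K0. zh k j j = zs k j"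
  shows "i < N \<Longrightarrow> tau k i j = Some a \<Longrightarrow> a + K0 \<le> k \<Longrightarrow> zh k i j = zs k j"
proof (induction k arbitrary: i a)
  case 0
  then show ?case
    using source alg_run_init[OF run _ j] by (cases "i = j") auto
next
  case (Suc k)
  show ?case
  proof (cases "i = j")
    case True
    then show ?thesis using source Suc.prems by simp
  next
    case False
    obtain u where u: "u < N" "tau (Suc k) i j = map_option Suc (tau k u j)"
      and zh_step: "zh (Suc k) i j = Ab j j *\<^sub>v zh k u j + vsum (d j) (\<lambda>q. Ab j q *\<^sub>v zh k i q) {..<j}"
      using alg_run_propagate[OF run Suc.prems(1) j False] .
    obtain a' where a': "tau k u j = Some a'" "a = Suc a'"
      using u(2) Suc.prems(2) by (cases "tau k u j") auto
    then have "K \<le> k" using Suc.prems(3) K by simp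
    have "zh k u j = zs k j" using Suc.IH[OF u(1) a'(1)] Suc.prems(3) a'(2) by simp
    moreover have "vsum (d j) (\<lambda>q. Ab j q *\<^sub>v zh k i q) {..<j} = vsum (d j) (\<lambda>q. Ab j q *\<^sub>v zs k q) {..<j}"
      using lower \<open>K \<le> k\<close> Suc.prems(1) by (intro vsum_cong) simp
    ultimately show ?thesis using zh_step zs_step j by simp
  qed
qed

lemma substate_eventually_exact:
  assumes j: "j < N" and nil: "(Ab j j - L j * Cb j j) ^\<^sub>m m = 0\<^sub>m (d j) (d j)"
    and E: "\<forall>k. E k \<subseteq> {..<N} \<times> {..<N}"
    and t: "strict_mono t" and conn: "\<forall>q. \<forall>i<N. \<forall>l<N. (i, l) \<in> (\<Union>\<tau>\<in>{t q..<t (Suc q)}. E \<tau>)\<^sup>*"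
    and lower: "\<forall>k\<ge>K. \<forall>i<N. \<forall>q<j. zh k i q = zs k q"
  shows "\<exists>K'. \<forall>k\<ge>K'. \<forall>i<N. zh k i j = zs k j"
proof -
  define K0 where "K0 = K + m"
  have "\<forall>k\<ge>K. \<forall>q<j. zh k j q = zs k q" using lower j by blast
  then have source: "\<forall>k\<ge>K0. zh k j j = zs k j"
    using source_estimate_exact[OF j nil] by (simp add: K0_def)
  define G where "G k i \<longleftrightarrow> (\<exists>a. tau k i j = Some a \<and> a + K0 \<le> k)" for k i
  have keep: "\<forall>k i. i < N \<longrightarrow> G k i \<longrightarrow> G (Suc k) i"
  proof (intro allI impI)
    fix k i assume i: "i < N" and "G k i"
    then obtain a where "tau k i j = Some a" "a + K0 \<le> k" by (auto simp: G_def)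
    moreover from this obtain a' where "a' \<le> Suc a" "tau (Suc k) i j = Some a'"
      using alg_run_age_keep[OF run i j] by blast
    ultimately show "G (Suc k) i" by (auto simp: G_def)
  qed
  have spread: "\<forall>k l i. (l, i) \<in> E k \<longrightarrow> G k l \<longrightarrow> G (Suc k) i"
  proof (intro allI impI)
    fix k l i assume edge: "(l, i) \<in> E k" and informed: "G k l"
    have l: "l < N" and i: "i < N" using edge E by auto
    show "G (Suc k) i"
    proof (cases "l = i")
      case True
      then show ?thesis using keep informed i by blast
    next
      case False
      obtain a where "tau k l j = Some a" "a + K0 \<le> k" using informed by (auto simp: G_def)
      moreover from this obtain a' where "a' \<le> Suc a" "tau (Suc k) i j = Some a'"
        using alg_run_age_spread[OF run i j l False edge] by blast
      ultimately show ?thesis by (auto simp: G_def)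
    qed
  qed
  have "G K0 j" using alg_run_source(1)[OF run j] by (simp add: G_def)
  then obtain K' where K': "\<forall>k\<ge>K'. \<forall>i<N. G k i"
    using eventually_all_informed[OF E t conn keep spread j] by blast
  show ?thesis
  proof (intro exI allI impI)
    fix k i assume "K' \<le> k" "i < N"
    then obtain a where "tau k i j = Some a" "a + K0 \<le> k" using K' by (auto simp: G_def)
    then show "zh k i j = zs k j"
      using fresh_estimate_exact[OF j _ lower source \<open>i < N\<close>] by (simp add: K0_def)
  qed
qed

lemma estimates_eventually_exact:
  assumes nil: "\<forall>j<N. (Ab j j - L j * Cb j j) ^\<^sub>m m j = 0\<^sub>m (d j) (d j)"
    and E: "\<forall>k. E k \<subseteq> {..<N} \<times> {..<N}"
    and t: "strict_mono t" and conn: "\<forall>q. \<forall>i<N. \<forall>l<N. (i, l) \<in> (\<Union>\<tau>\<in>{t q..<t (Suc q)}. E \<tau>)\<^sup>*"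
  shows "\<exists>K. \<forall>k\<ge>K. \<forall>i<N. \<forall>j<N. zh k i j = zs k j"
proof -
  have "\<exists>K. \<forall>k\<ge>K. \<forall>i<N. \<forall>q<j. zh k i q = zs k q" if "j \<le> N" for j
    using that
  proof (induction j)
    case (Suc j)
    then obtain K where K: "\<forall>k\<ge>K. \<forall>i<N. \<forall>q<j. zh k i q = zs k q" by auto
    have "j < N" using Suc.prems by simp
    then obtain K' where K': "\<forall>k\<ge>K'. \<forall>i<N. zh k i j = zs k j"
      using substate_eventually_exact[OF _ _ E t conn K] nil by blast
    have "\<forall>k\<ge>max K K'. \<forall>i<N. \<forall>q<Suc j. zh k i q = zs k q"
      using K K' by (auto simp: less_Suc_eq)
    then show ?case by blast
  qed simp
  then show ?thesis by blast
qed

end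

lemma alg_run_cong_output:
  assumes "alg_run N d Ab Cb L E y zh tau" and "\<forall>k. \<forall>j<N. y k j = y' k j"
  shows "alg_run N d Ab Cb L E y' zh tau"
  using assms by (simp add: alg_run_def)

lemma similar_trajectory:
  assumes A: "A \<in> carrier_mat n n" and B: "B \<in> carrier_mat n n"
    and T: "T \<in> carrier_mat n n" "invertible_mat T" and AT: "A * T = T * B"
    and x0: "x 0 \<in> carrier_vec n" and x: "\<forall>k. x (Suc k) = A *\<^sub>v x k"
  obtains z where "\<forall>k. z k \<in> carrier_vec n" "\<forall>k. x k = T *\<^sub>v z k" "\<forall>k. z (Suc k) = B *\<^sub>v z k"
proof -
  obtain Ti where TTi: "T * Ti = 1\<^sub>m (dim_row T)" and TiT: "Ti * T = 1\<^sub>m (dim_row Ti)"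
    using T(2) unfolding invertible_mat_def inverts_mat_def by blast
  have "dim_col Ti = n" using arg_cong[OF TTi, of dim_col] T(1) by simp
  moreover have "dim_row Ti = n" using arg_cong[OF TiT, of dim_col] T(1) by simp
  ultimately have Ti: "Ti \<in> carrier_mat n n" "T * Ti = 1\<^sub>m n" "Ti * T = 1\<^sub>m n"
    using TTi TiT T(1) by auto
  define z where "z k = Ti *\<^sub>v x k" for k
  have xC: "x k \<in> carrier_vec n" for k
    using x0 x A by (induction k) auto
  have zC: "z k \<in> carrier_vec n" for k
    using Ti xC by (simp add: z_def)
  have xz: "x k = T *\<^sub>v z k" for k
  proof -
    have "(T * Ti) *\<^sub>v x k = T *\<^sub>v z k"
      unfolding z_def by (rule assoc_mult_mat_vec) (use T Ti xC in auto)
    then show ?thesis using xC unfolding Ti(2) by simp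
  qed
  have TiAT: "Ti * A * T = B"
  proof -
    have "Ti * A * T = Ti * (A * T)" using Ti A T by (simp add: assoc_mult_mat[of _ n n _ n _ n])
    also have "\<dots> = (Ti * T) * B"
      unfolding AT by (rule assoc_mult_mat[OF Ti(1) T(1) B, symmetric])
    finally show ?thesis using B unfolding Ti(3) by simp
  qed
  have "z (Suc k) = B *\<^sub>v z k" for k
  proof -
    have "z (Suc k) = Ti *\<^sub>v (A *\<^sub>v x k)" using x by (simp add: z_def)
    also have "\<dots> = Ti *\<^sub>v (A *\<^sub>v (T *\<^sub>v z k))" by (subst xz) (rule refl)
    also have "\<dots> = (Ti * A * T) *\<^sub>v z k"
      using Ti A T zC by (simp add: assoc_mult_mat_vec[of _ n n _ n])
    finally show ?thesis using TiAT by simp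
  qed
  then show ?thesis using that zC xz by blast
qed

lemma deadbeat_block_gains:
  fixes N :: nat and Ab Cb :: "nat \<Rightarrow> nat \<Rightarrow> real mat"
  assumes Ab: "\<forall>j<N. \<forall>q\<le>j. Ab j q \<in> carrier_mat (d j) (d q)"
    and Cb: "\<forall>j<N. \<forall>q\<le>j. Cb j q \<in> carrier_mat (r j) (d q)"
    and obs: "\<forall>j<N. observable (Ab j j) (Cb j j)"
  obtains L m where "\<forall>j<N. L j \<in> carrier_mat (d j) (r j)"
    "\<forall>j<N. (Ab j j - L j * Cb j j) ^\<^sub>m m j = 0\<^sub>m (d j) (d j)"
proof -
  have "\<forall>j. \<exists>Lm. j < N \<longrightarrow> fst Lm \<in> carrier_mat (d j) (r j) \<and>
      (Ab j j - fst Lm * Cb j j) ^\<^sub>m snd Lm = 0\<^sub>m (d j) (d j)"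
  proof
    fix j
    show "\<exists>Lm. j < N \<longrightarrow> fst Lm \<in> carrier_mat (d j) (r j) \<and>
      (Ab j j - fst Lm * Cb j j) ^\<^sub>m snd Lm = 0\<^sub>m (d j) (d j)"
    proof (cases "j < N")
      case True
      from Ab[rule_format, OF True le_refl] Cb[rule_format, OF True le_refl]
        obs[rule_format, OF True]
      obtain Lj mj where "Lj \<in> carrier_mat (d j) (r j)" "(Ab j j - Lj * Cb j j) ^\<^sub>m mj = 0\<^sub>m (d j) (d j)"
        by (rule observable_deadbeat_gain)
      then show ?thesis by (intro exI[of _ "(Lj, mj)"]) simp
    qed simp
  qed
  then obtain Lm where "\<forall>j. j < N \<longrightarrow> fst (Lm j) \<in> carrier_mat (d j) (r j) \<and>
      (Ab j j - fst (Lm j) * Cb j j) ^\<^sub>m snd (Lm j) = 0\<^sub>m (d j) (d j)"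
    by (metis choice)
  then show ?thesis using that[of "\<lambda>j. fst (Lm j)" "\<lambda>j. snd (Lm j)"] by simp
qed

lemma distributed_estimates_exact:
  assumes A_dim: "A \<in> carrier_mat (off d N) (off d N)"
    and C_dim: "\<forall>i<N. C i \<in> carrier_mat (r i) (off d N)"
    and T_dim: "T \<in> carrier_mat (off d N) (off d N)" and T_inv: "invertible_mat T"
    and Ab_dim: "\<forall>j<N. \<forall>q\<le>j. Ab j q \<in> carrier_mat (d j) (d q)"
    and Cb_dim: "\<forall>i<N. \<forall>q\<le>i. Cb i q \<in> carrier_mat (r i) (d q)"
    and A_blk: "A * T = T * blk_lower_mat d N Ab"
    and C_blk: "\<forall>i<N. C i * T = blk_row_mat d N (r i) i (Cb i)"
    and L: "\<forall>j<N. L j \<in> carrier_mat (d j) (r j)"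
    and deadbeat: "\<forall>j<N. (Ab j j - L j * Cb j j) ^\<^sub>m m j = 0\<^sub>m (d j) (d j)"
    and E_V: "\<forall>k. E k \<subseteq> {..<N} \<times> {..<N}"
    and t: "strict_mono t" and conn: "\<forall>q. \<forall>i<N. \<forall>l<N. (i, l) \<in> (\<Union>\<tau>\<in>{t q..<t (Suc q)}. E \<tau>)\<^sup>*"
    and x0: "x 0 \<in> carrier_vec (off d N)" and x: "\<forall>k. x (Suc k) = A *\<^sub>v x k"
    and run: "alg_run N d Ab Cb L E (\<lambda>k j. C j *\<^sub>v x k) zh tau"
  shows "\<exists>K. \<forall>k\<ge>K. \<forall>i<N. T *\<^sub>v stack_vec d N (zh k i) = x k"
proof -
  obtain z where z: "\<forall>k. z k \<in> carrier_vec (off d N)" "\<forall>k. x k = T *\<^sub>v z k"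
    "\<forall>k. z (Suc k) = blk_lower_mat d N Ab *\<^sub>v z k"
    using similar_trajectory[OF A_dim _ T_dim T_inv A_blk x0 x] by (auto simp: blk_lower_mat_def)
  have "C j *\<^sub>v x k = Cb j j *\<^sub>v block_vec d j (z k)
      + vsum (r j) (\<lambda>q. Cb j q *\<^sub>v block_vec d q (z k)) {..<j}" if j: "j < N" for k j
  proof -
    have "C j *\<^sub>v x k = (C j * T) *\<^sub>v z k"
      using z C_dim T_dim j by (simp add: assoc_mult_mat_vec[of _ "r j" "off d N" _ "off d N"])
    also have "\<dots> = blk_row_mat d N (r j) j (Cb j) *\<^sub>v z k"
      using C_blk j by simp
    finally show ?thesis
      using blk_row_mat_mult[OF j] z Cb_dim j by simp
  qed
  then have run': "alg_run N d Ab Cb L E (\<lambda>k j. Cb j j *\<^sub>v block_vec d j (z k)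
      + vsum (r j) (\<lambda>q. Cb j q *\<^sub>v block_vec d q (z k)) {..<j}) zh tau"
    by (intro alg_run_cong_output[OF run]) simp
  have "block_vec d j (z (Suc k)) = Ab j j *\<^sub>v block_vec d j (z k)
      + vsum (d j) (\<lambda>q. Ab j q *\<^sub>v block_vec d q (z k)) {..<j}" if "j < N" for k j
    using block_vec_blk_lower_mat_mult[OF that _ Ab_dim] z by simp
  then interpret observer_run N d r Ab Cb L E "\<lambda>k j. block_vec d j (z k)" zh tau
    using run' Ab_dim Cb_dim L by unfold_locales simp_all
  obtain K where K: "\<forall>k\<ge>K. \<forall>i<N. \<forall>j<N. zh k i j = block_vec d j (z k)"
    using estimates_eventually_exact[OF deadbeat E_V t conn] by blast
  have "stack_vec d N (zh k i) = z k" if "K \<le> k" "i < N" for k i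
    using stack_vec_block_vec[of "z k" d N "zh k i"] z(1) K that by blast
  then show ?thesis using z(2) by (intro exI[of _ K]) auto
qed

theorem theorem1:
  fixes N :: nat and d r :: "nat \<Rightarrow> nat"
    and A T :: "real mat" and C :: "nat \<Rightarrow> real mat"
    and Ab Cb :: "nat \<Rightarrow> nat \<Rightarrow> real mat"
    and E :: "nat \<Rightarrow> (nat \<times> nat) set"
    and \<rho> :: real
  assumes N: "N \<ge> 1"
    and A_dim: "A \<in> carrier_mat (off d N) (off d N)"
    and C_dim: "\<forall>i<N. C i \<in> carrier_mat (r i) (off d N)"
    and obs: "observable A (vstack_mat r N (off d N) C)"
    and T_dim: "T \<in> carrier_mat (off d N) (off d N)"
    and T_inv: "invertible_mat T"
    and Ab_dim: "\<forall>j<N. \<forall>q\<le>j. Ab j q \<in> carrier_mat (d j) (d q)"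
    and Cb_dim: "\<forall>i<N. \<forall>q\<le>i. Cb i q \<in> carrier_mat (r i) (d q)"
    and A_blk: "A * T = T * blk_lower_mat d N Ab"
    and C_blk: "\<forall>i<N. C i * T = blk_row_mat d N (r i) i (Cb i)"
    and obs_blk: "\<forall>j<N. observable (Ab j j) (Cb j j)"
    and E_V: "\<forall>k. E k \<subseteq> {..<N} \<times> {..<N}"
    and graph: "graph_conditions N E"
    and rho: "0 < \<rho>" "\<rho> < 1"
  shows "\<exists>L :: nat \<Rightarrow> real mat. (\<forall>j<N. L j \<in> carrier_mat (d j) (r j)) \<and>
     (\<forall>(x :: nat \<Rightarrow> real vec) zh tau.
        x 0 \<in> carrier_vec (off d N) \<longrightarrow>
        (\<forall>k. x (Suc k) = A *\<^sub>v x k) \<longrightarrow>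
        alg_run N d Ab Cb L E (\<lambda>k j. C j *\<^sub>v x k) zh tau \<longrightarrow>
        (\<exists>c \<ge> 0. \<exists>K :: nat. \<forall>k\<ge>K. \<forall>i<N.
            vnorm (T *\<^sub>v stack_vec d N (zh k i) - x k) \<le> c * \<rho> ^ k))"
proof -
  obtain L m where L: "\<forall>j<N. L j \<in> carrier_mat (d j) (r j)"
    and deadbeat: "\<forall>j<N. (Ab j j - L j * Cb j j) ^\<^sub>m m j = 0\<^sub>m (d j) (d j)"
    using deadbeat_block_gains[OF Ab_dim Cb_dim obs_blk] .
  obtain t where t: "strict_mono t"
    and conn: "\<forall>q. \<forall>i<N. \<forall>l<N. (i, l) \<in> (\<Union>\<tau>\<in>{t q..<t (Suc q)}. E \<tau>)\<^sup>*"
    using graph unfolding graph_conditions_def Let_def by blast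
  have vnorm_zero: "vnorm (v - v) = 0" for v
    by (simp add: vnorm_def)
  show ?thesis
  proof (intro exI[of _ L] conjI allI impI)
    fix x zh tau
    assume "x 0 \<in> carrier_vec (off d N)" "\<forall>k. x (Suc k) = A *\<^sub>v x k"
      "alg_run N d Ab Cb L E (\<lambda>k j. C j *\<^sub>v x k) zh tau"
    then obtain K where "\<forall>k\<ge>K. \<forall>i<N. T *\<^sub>v stack_vec d N (zh k i) = x k"
      using distributed_estimates_exact[OF A_dim C_dim T_dim T_inv Ab_dim Cb_dim A_blk C_blk
          L deadbeat E_V t conn] by blast
    then have "\<forall>k\<ge>K. \<forall>i<N. vnorm (T *\<^sub>v stack_vec d N (zh k i) - x k) \<le> 0 * \<rho> ^ k"
      using vnorm_zero by simp
    then show "\<exists>c\<ge>0. \<exists>K. \<forall>k\<ge>K. \<forall>i<N. vnorm (T *\<^sub>v stack_vec d N (zh k i) - x k) \<le> c * \<rho> ^ k"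
      by blast
  qed (use L in blast)
qed

end
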